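(* For Domineering on the $5 \times n$ board ($5$ rows, $n$ columns): the $5\times 1$ and $5 \times 3$ boards have outcome $V$, the $5\times 2$ and $5\times 4$ boards have outcome $H$, the $5 \times 5$ board has outcome ${\rm 2nd}$, and the $5 \times n$ board has outcome $H$ for every $n \ge 6$.
   Context: Domineering on an $m \times n$ board (a rectangle of $m$ rows and $n$ columns of unit cells): two players, Vera and Hepzibah, alternately place dominoes on empty cells; Vera places vertical dominoes (covering two vertically adjacent empty cells), Hepzibah places horizontal dominoes (covering two horizontally adjacent empty cells). A player who cannot move on her turn loses. The outcome class of a position is $V$ if Vera wins with optimal play regardless of who moves first, $H$ if Hepzibah wins regardless of who moves first, ${\rm 1st}$ if the player who moves first wins, and ${\rm 2nd}$ if the player who moves second wins. *)

theory Defs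
  imports Main
begin

text \<open>Cells are pairs (row, column). A position is the set of empty cells.\<close>
type_synonym cell = "nat \<times> nat"

datatype player = Vera | Hepzibah

fun opponent :: "player \<Rightarrow> player" where
  "opponent Vera = Hepzibah"
| "opponent Hepzibah = Vera"

definition board :: "nat \<Rightarrow> nat \<Rightarrow> cell set" where
  "board m n = {(r, c). r < m \<and> c < n}"

fun moves :: "player \<Rightarrow> cell set \<Rightarrow> cell set set" where
  "moves Vera S = {{(r, c), (Suc r, c)} | r c. (r, c) \<in> S \<and> (Suc r, c) \<in> S}"
| "moves Hepzibah S = {{(r, c), (r, Suc c)} | r c. (r, c) \<in> S \<and> (r, Suc c) \<in> S}"

text \<open>wins_first p S: player p, moving first from S, has a winning strategy;
  wins_second p S: player p wins when the opponent moves first from S.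
  Normal play: a player who cannot move loses.\<close>
inductive wins_first :: "player \<Rightarrow> cell set \<Rightarrow> bool"
  and wins_second :: "player \<Rightarrow> cell set \<Rightarrow> bool" where
  first: "d \<in> moves p S \<Longrightarrow> wins_second p (S - d) \<Longrightarrow> wins_first p S"
| second: "(\<forall>d \<in> moves (opponent p) S. wins_first p (S - d)) \<Longrightarrow> wins_second p S"

datatype outcome = OV | OH | OFirst | OSecond

fun has_outcome :: "cell set \<Rightarrow> outcome \<Rightarrow> bool" where
  "has_outcome S OV = (wins_first Vera S \<and> wins_second Vera S)"
| "has_outcome S OH = (wins_first Hepzibah S \<and> wins_second Hepzibah S)"
| "has_outcome S OFirst = (wins_first Vera S \<and> wins_first Hepzibah S)"
| "has_outcome S OSecond = (wins_second Vera S \<and> wins_second Hepzibah S)"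

end

theory Submission
  imports Defs
begin

text \<open>A \<open>5 \<times> n\<close> board with \<open>n \<ge> 6\<close> splits into \<open>5 \<times> 2\<close> and \<open>5 \<times> 5\<close> boards side by side.
  Vera's vertical dominoes never cross a column boundary, so Hepzibah, who wins each piece
  moving second and the \<open>5 \<times> 2\<close> piece also moving first, wins the whole board by always
  answering in the piece Vera has just played in. The small boards are settled by game-tree
  certificates checked inside the logic; Vera's wins on \<open>5 \<times> 3\<close> and \<open>5 \<times> 5\<close> are Hepzibah's
  wins on \<open>3 \<times> 5\<close> and \<open>5 \<times> 5\<close> transposed.\<close>

section \<open>Moves and board symmetries\<close>

lemma wins_firstD: "wins_first p S \<Longrightarrow> \<exists>d \<in> moves p S. wins_second p (S - d)"
  by (erule wins_first.cases) auto

lemma wins_secondD: "wins_second p S \<Longrightarrow> d \<in> moves (opponent p) S \<Longrightarrow> wins_first p (S - d)"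
  by (erule wins_second.cases) auto

lemma wins_second_if_no_moves: "moves (opponent p) S = {} \<Longrightarrow> wins_second p S"
  by (rule second) simp

fun partner :: "player \<Rightarrow> cell \<Rightarrow> cell" where
  "partner Vera (r, c) = (Suc r, c)"
| "partner Hepzibah (r, c) = (r, Suc c)"

lemma moves_partner: "moves p S = (\<lambda>x. {x, partner p x}) ` {x \<in> S. partner p x \<in> S}"
  by (cases p) (auto, blast+)

lemma move_subset: "d \<in> moves p S \<Longrightarrow> d \<subseteq> S"
  by (auto simp: moves_partner)

lemma card_move: "d \<in> moves p S \<Longrightarrow> card d = 2"
proof -
  have "x \<noteq> partner p x" for x
    by (cases p; cases x) auto
  then show "d \<in> moves p S \<Longrightarrow> card d = 2"
    by (auto simp: moves_partner)
qed

lemma moves_mono: "S \<subseteq> T \<Longrightarrow> moves p S \<subseteq> moves p T"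
  by (auto simp: moves_partner)

lemma moves_image:
  assumes "inj f" and partner_f: "\<And>x. f (partner p x) = partner q (f x)"
  shows "moves q (f ` S) = image f ` moves p S"
proof -
  have "{y \<in> f ` S. partner q y \<in> f ` S} = f ` {x \<in> S. partner p x \<in> S}"
    using \<open>inj f\<close> by (auto simp flip: partner_f simp: inj_image_mem_iff inj_eq)
  then show ?thesis
    by (simp add: moves_partner image_image partner_f)
qed

lemma wins_image:
  assumes "inj f" and "\<And>p. g (opponent p) = opponent (g p)"
    and "\<And>p x. f (partner p x) = partner (g p) (f x)"
  shows "wins_first p S \<Longrightarrow> wins_first (g p) (f ` S)"
    and "wins_second p S \<Longrightarrow> wins_second (g p) (f ` S)"
proof (induction rule: wins_first_wins_second.inducts)
  case (first d p S)
  have "f ` d \<in> moves (g p) (f ` S)"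
    using first.hyps(1) moves_image[OF assms(1,3)] by auto
  moreover have "f ` S - f ` d = f ` (S - d)"
    using \<open>inj f\<close> by (simp add: image_set_diff)
  ultimately show ?case
    using first.IH by (metis wins_first_wins_second.first)
next
  case (second p S)
  show ?case
  proof (rule wins_first_wins_second.second, rule ballI)
    fix d assume "d \<in> moves (opponent (g p)) (f ` S)"
    then obtain d' where "d' \<in> moves (opponent p) S" "d = f ` d'"
      using moves_image[OF assms(1,3)] assms(2) by (metis imageE)
    moreover have "f ` S - f ` d' = f ` (S - d')"
      using \<open>inj f\<close> by (simp add: image_set_diff)
    ultimately show "wins_first (g p) (f ` S - d)"
      using second.IH by auto
  qed
qed

lemma wins_transpose:
  shows wins_first_transpose: "wins_first p S \<Longrightarrow> wins_first (opponent p) (prod.swap ` S)"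
    and wins_second_transpose: "wins_second p S \<Longrightarrow> wins_second (opponent p) (prod.swap ` S)"
proof -
  have "prod.swap (partner p x) = partner (opponent p) (prod.swap x)" for p x
    by (cases p; cases x) auto
  then show "wins_first p S \<Longrightarrow> wins_first (opponent p) (prod.swap ` S)"
    and "wins_second p S \<Longrightarrow> wins_second (opponent p) (prod.swap ` S)"
    using wins_image[of prod.swap opponent] by auto
qed

definition shift_cols :: "nat \<Rightarrow> cell \<Rightarrow> cell" where
  "shift_cols k x = (fst x, snd x + k)"

lemma wins_shift_cols:
  shows "wins_first p S \<Longrightarrow> wins_first p (shift_cols k ` S)"
    and "wins_second p S \<Longrightarrow> wins_second p (shift_cols k ` S)"
proof -
  have "inj (shift_cols k)"
    by (auto simp: inj_def shift_cols_def prod_eq_iff)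
  moreover have "shift_cols k (partner p x) = partner (id p) (shift_cols k x)" for p x
    by (cases p; cases x) (auto simp: shift_cols_def)
  ultimately show "wins_first p S \<Longrightarrow> wins_first p (shift_cols k ` S)"
    and "wins_second p S \<Longrightarrow> wins_second p (shift_cols k ` S)"
    using wins_image[of "shift_cols k" id] by auto
qed

section \<open>Column-disjoint sums\<close>

lemma card_Diff_move:
  assumes "finite S" and "d \<in> moves p S"
  shows "card (S - d) < card S"
proof -
  have "d \<noteq> {}"
    using card_move[OF assms(2)] by auto
  then show ?thesis
    using assms move_subset[OF assms(2)] by (intro psubset_card_mono) auto
qed

definition column_disjoint :: "cell set \<Rightarrow> cell set \<Rightarrow> bool" where
  "column_disjoint A B \<longleftrightarrow> (\<forall>x \<in> A. \<forall>y \<in> B. snd x \<noteq> snd y)"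

lemma column_disjoint_sym: "column_disjoint A B \<Longrightarrow> column_disjoint B A"
  unfolding column_disjoint_def by fastforce

lemma column_disjoint_Diff: "column_disjoint A B \<Longrightarrow> column_disjoint (A - d) B"
  by (auto simp: column_disjoint_def)

lemma column_disjoint_union_Diff_move:
  "column_disjoint A B \<Longrightarrow> d \<in> moves p A \<Longrightarrow> A \<union> B - d = (A - d) \<union> B"
  using move_subset by (force simp: column_disjoint_def)

lemma vera_move_column_disjoint_union:
  assumes "column_disjoint A B" and "d \<in> moves Vera (A \<union> B)"
  shows "d \<in> moves Vera A \<or> d \<in> moves Vera B"
proof -
  obtain r c where d: "d = {(r, c), (Suc r, c)}"
    and cells: "(r, c) \<in> A \<union> B" "(Suc r, c) \<in> A \<union> B"
    using assms(2) by auto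
  have "(r, c) \<in> A \<longleftrightarrow> (Suc r, c) \<in> A"
    using assms(1) cells by (force simp: column_disjoint_def)
  then show ?thesis
    using d cells by auto
qed

lemma hepzibah_wins_column_disjoint_union:
  assumes "finite A" "finite B" "column_disjoint A B" and "wins_second Hepzibah A"
  shows "wins_second Hepzibah B \<Longrightarrow> wins_second Hepzibah (A \<union> B)"
    and "wins_first Hepzibah B \<Longrightarrow> wins_first Hepzibah (A \<union> B)"
proof -
  have union_wins:
    "(wins_second Hepzibah A \<longrightarrow> wins_second Hepzibah B \<longrightarrow> wins_second Hepzibah (A \<union> B))
     \<and> (wins_first Hepzibah A \<longrightarrow> wins_second Hepzibah B \<longrightarrow> wins_first Hepzibah (A \<union> B))"
    if "finite A" "finite B" "column_disjoint A B" for A B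
    using that
  proof (induction "card A + card B" arbitrary: A B rule: less_induct)
    case less
    show ?case
    proof (intro conjI impI)
      assume A: "wins_second Hepzibah A" and B: "wins_second Hepzibah B"
      show "wins_second Hepzibah (A \<union> B)"
      proof (rule second, rule ballI)
        fix d assume "d \<in> moves (opponent Hepzibah) (A \<union> B)"
        then have "d \<in> moves Vera (A \<union> B)"
          by (simp only: opponent.simps)
        then consider "d \<in> moves Vera A" | "d \<in> moves Vera B"
          using vera_move_column_disjoint_union[OF less.prems(3)] by blast
        then show "wins_first Hepzibah (A \<union> B - d)"
        proof cases
          case 1
          show ?thesis
            unfolding column_disjoint_union_Diff_move[OF less.prems(3) 1]
            using less.hyps[of "A - d" B] card_Diff_move[OF less.prems(1) 1]
              wins_secondD[OF A] 1 B less.prems column_disjoint_Diff by simp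
        next
          case 2
          show ?thesis
            unfolding Un_commute[of A] column_disjoint_union_Diff_move[OF
                column_disjoint_sym[OF less.prems(3)] 2]
            using less.hyps[of "B - d" A] card_Diff_move[OF less.prems(2) 2]
              wins_secondD[OF B] 2 A less.prems column_disjoint_Diff column_disjoint_sym by simp
        qed
      qed
    next
      assume "wins_first Hepzibah A" and B: "wins_second Hepzibah B"
      then obtain d where d: "d \<in> moves Hepzibah A" and A': "wins_second Hepzibah (A - d)"
        using wins_firstD by blast
      have "wins_second Hepzibah (A \<union> B - d)"
        unfolding column_disjoint_union_Diff_move[OF less.prems(3) d]
        using less.hyps[of "A - d" B] card_Diff_move[OF less.prems(1) d] A' B less.prems
          column_disjoint_Diff by simp
      moreover have "d \<in> moves Hepzibah (A \<union> B)"
        using d moves_mono by blast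
      ultimately show "wins_first Hepzibah (A \<union> B)"
        by (rule first[rotated])
    qed
  qed
  show "wins_second Hepzibah B \<Longrightarrow> wins_second Hepzibah (A \<union> B)"
    using union_wins[OF assms(1-3)] assms(4) by blast
  show "wins_first Hepzibah B \<Longrightarrow> wins_first Hepzibah (A \<union> B)"
    using union_wins[OF assms(2,1) column_disjoint_sym[OF assms(3)]] assms(4)
    by (simp add: Un_commute)
qed

section \<open>Safe moves\<close>

definition vert_isolated :: "cell set \<Rightarrow> cell \<Rightarrow> bool" where
  "vert_isolated S x \<longleftrightarrow>
     x \<in> S \<and> (case x of (r, c) \<Rightarrow> (Suc r, c) \<notin> S \<and> (r = 0 \<or> (r - 1, c) \<notin> S))"

definition vert_live :: "cell set \<Rightarrow> cell set" where
  "vert_live S = {x \<in> S. \<not> vert_isolated S x}"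

lemma finite_vert_live: "finite S \<Longrightarrow> finite (vert_live S)"
  by (simp add: vert_live_def)

lemma vert_isolated_Diff: "vert_isolated S x \<Longrightarrow> x \<notin> d \<Longrightarrow> vert_isolated (S - d) x"
  by (auto simp: vert_isolated_def split: prod.splits)

lemma vert_live_Diff: "vert_live (S - d) \<subseteq> vert_live S - d"
  using vert_isolated_Diff by (auto simp: vert_live_def)

lemma vera_move_subset_vert_live: "d \<in> moves Vera S \<Longrightarrow> d \<subseteq> vert_live S"
  by (auto simp: vert_live_def vert_isolated_def)

definition domino_cells :: "player \<Rightarrow> cell list \<Rightarrow> cell list" where
  "domino_cells p xs = concat (map (\<lambda>x. [x, partner p x]) xs)"

lemma domino_cells_simps [simp]:
  "domino_cells p [] = []"
  "domino_cells p (x # xs) = x # partner p x # domino_cells p xs"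
  by (simp_all add: domino_cells_def)

text \<open>Hepzibah reserves disjoint horizontal dominoes on vertically isolated cells. Vera can
  never touch them, and each of her moves removes two vertically live cells, so Vera runs
  out of moves before Hepzibah runs out of reserved ones.\<close>
lemma hepzibah_wins_by_safe_moves:
  assumes "finite S" and "distinct (domino_cells Hepzibah xs)"
    and "\<forall>y \<in> set (domino_cells Hepzibah xs). vert_isolated S y"
  shows "card (vert_live S) div 2 < length xs \<Longrightarrow> wins_first Hepzibah S"
    and "card (vert_live S) div 2 \<le> length xs \<Longrightarrow> wins_second Hepzibah S"
proof -
  have "(card (vert_live S) div 2 < length xs \<longrightarrow> wins_first Hepzibah S)
      \<and> (card (vert_live S) div 2 \<le> length xs \<longrightarrow> wins_second Hepzibah S)"
    using assms
  proof (induction "card S" arbitrary: S xs rule: less_induct)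
    case less
    show ?case
    proof (intro conjI impI)
      assume less_length: "card (vert_live S) div 2 < length xs"
      then obtain x xs' where xs: "xs = x # xs'"
        by (cases xs) auto
      let ?d = "{x, partner Hepzibah x}"
      have move: "?d \<in> moves Hepzibah S"
        using less.prems(3) xs by (auto simp: moves_partner vert_isolated_def)
      have "\<forall>y \<in> set (domino_cells Hepzibah xs'). vert_isolated (S - ?d) y"
        using less.prems(2,3) xs by (auto intro: vert_isolated_Diff)
      moreover have "card (vert_live (S - ?d)) \<le> card (vert_live S)"
        using vert_live_Diff finite_vert_live[OF less.prems(1)]
        by (meson Diff_subset card_mono order_trans)
      ultimately have "wins_second Hepzibah (S - ?d)"
        using less.hyps[OF card_Diff_move[OF less.prems(1) move]] less.prems less_length xs
        by (auto dest: div_le_mono[of _ _ 2])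
      then show "wins_first Hepzibah S"
        by (rule first[OF move])
    next
      assume le_length: "card (vert_live S) div 2 \<le> length xs"
      show "wins_second Hepzibah S"
      proof (rule second, rule ballI)
        fix d assume "d \<in> moves (opponent Hepzibah) S"
        then have move: "d \<in> moves Vera S"
          by (simp only: opponent.simps)
        have live: "d \<subseteq> vert_live S"
          using vera_move_subset_vert_live[OF move] .
        have "\<forall>y \<in> set (domino_cells Hepzibah xs). vert_isolated (S - d) y"
          using less.prems(3) live by (auto simp: vert_live_def intro: vert_isolated_Diff)
        moreover have "card (vert_live (S - d)) \<le> card (vert_live S) - 2"
          using vert_live_Diff card_mono finite_vert_live[OF less.prems(1)] live card_move[OF move]
          by (metis card_Diff_subset finite_Diff finite_subset)
        moreover have "card (vert_live S) \<ge> 2"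
          using card_mono[OF finite_vert_live[OF less.prems(1)] live] card_move[OF move] by simp
        ultimately show "wins_first Hepzibah (S - d)"
          using less.hyps[OF card_Diff_move[OF less.prems(1) move]] less.prems le_length
          by (auto dest: div_le_mono[of _ _ 2])
      qed
    qed
  qed
  then show "card (vert_live S) div 2 < length xs \<Longrightarrow> wins_first Hepzibah S"
    and "card (vert_live S) div 2 \<le> length xs \<Longrightarrow> wins_second Hepzibah S"
    by blast+
qed

section \<open>Certificates\<close>

text \<open>A grid lists the rows of a position; \<open>True\<close> marks an empty cell.\<close>
type_synonym grid = "bool list list"

definition full_grid :: "nat \<Rightarrow> nat \<Rightarrow> grid" where
  "full_grid m n = replicate m (replicate n True)"

definition free :: "grid \<Rightarrow> cell \<Rightarrow> bool" where
  "free g x = (case x of (r, c) \<Rightarrow> r < length g \<and> c < length (g ! r) \<and> g ! r ! c)"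

definition free_cells :: "grid \<Rightarrow> cell set" where
  "free_cells g = {x. free g x}"

definition fill :: "grid \<Rightarrow> cell \<Rightarrow> grid" where
  "fill g x = (case x of (r, c) \<Rightarrow> g[r := (g ! r)[c := False]])"

definition grid_positions :: "grid \<Rightarrow> cell list" where
  "grid_positions g = concat (map (\<lambda>r. map (\<lambda>c. (r, c)) [0..<length (g ! r)]) [0..<length g])"

definition vert_move_list :: "grid \<Rightarrow> cell list" where
  "vert_move_list g = filter (\<lambda>(r, c). free g (r, c) \<and> free g (Suc r, c)) (grid_positions g)"

definition free_isolated :: "grid \<Rightarrow> cell \<Rightarrow> bool" where
  "free_isolated g x = (case x of (r, c) \<Rightarrow>
     free g (r, c) \<and> \<not> free g (Suc r, c) \<and> (r = 0 \<or> \<not> free g (r - 1, c)))"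

definition vert_live_list :: "grid \<Rightarrow> cell list" where
  "vert_live_list g = filter (\<lambda>x. free g x \<and> \<not> free_isolated g x) (grid_positions g)"

fun pair_runs :: "bool list \<Rightarrow> nat \<Rightarrow> nat list" where
  "pair_runs (True # True # bs) c = c # pair_runs bs (c + 2)"
| "pair_runs (b # bs) c = pair_runs bs (c + 1)"
| "pair_runs [] c = []"

definition isolated_pairs :: "grid \<Rightarrow> cell list" where
  "isolated_pairs g = concat (map (\<lambda>r. map (\<lambda>c. (r, c))
     (pair_runs (map (\<lambda>c. free_isolated g (r, c)) [0..<length (g ! r)]) 0)) [0..<length g])"

definition counting_ok :: "bool \<Rightarrow> grid \<Rightarrow> bool" where
  "counting_ok first g = (let xs = isolated_pairs g; n = length (vert_live_list g) div 2 in
     distinct (domino_cells Hepzibah xs) \<and> list_all (free_isolated g) (domino_cells Hepzibah xs)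
     \<and> (if first then n < length xs else n \<le> length xs))"

text \<open>Certificates for Hepzibah's wins, found by a game-tree search. \<open>Play r c t\<close>: Hepzibah
  covers \<open>(r, c)\<close> and \<open>(r, c + 1)\<close>, and \<open>t\<close> certifies the position with Vera to move.
  \<open>Replies ts\<close>: one certificate for each of Vera's moves, in the order of
  \<open>vert_move_list\<close>. \<open>Leaf\<close>: the position is settled by \<open>hepzibah_wins_by_safe_moves\<close>.\<close>
datatype cert = Leaf | Play nat nat cert | Replies "cert list"

fun cert_ok :: "bool \<Rightarrow> grid \<Rightarrow> cert \<Rightarrow> bool"
  and certs_ok :: "grid \<Rightarrow> cell list \<Rightarrow> cert list \<Rightarrow> bool" where
  "cert_ok first g Leaf = counting_ok first g"
| "cert_ok first g (Play r c t) =
     (first \<and> free g (r, c) \<and> free g (r, Suc c)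
      \<and> cert_ok False (fill (fill g (r, c)) (r, Suc c)) t)"
| "cert_ok first g (Replies ts) = (\<not> first \<and> certs_ok g (vert_move_list g) ts)"
| "certs_ok g [] [] = True"
| "certs_ok g (m # ms) (t # ts) =
     (cert_ok True (fill (fill g m) (partner Vera m)) t \<and> certs_ok g ms ts)"
| "certs_ok g [] (t # ts) = False"
| "certs_ok g (m # ms) [] = False"

lemma free_fill: "free (fill g x) y \<longleftrightarrow> free g y \<and> y \<noteq> x"
proof -
  obtain a b where x: "x = (a, b)" by (cases x)
  obtain a' b' where y: "y = (a', b')" by (cases y)
  show ?thesis
    unfolding x y free_def fill_def
    by (cases "a = a'"; cases "a' < length g"; cases "b = b'") (auto simp: nth_list_update)
qed

lemma free_cells_fill: "free_cells (fill g x) = free_cells g - {x}"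
  by (auto simp: free_cells_def free_fill)

lemma free_cells_subset_positions: "free_cells g \<subseteq> set (grid_positions g)"
  by (auto simp: free_cells_def free_def grid_positions_def)

lemma finite_free_cells: "finite (free_cells g)"
  using free_cells_subset_positions by (rule finite_subset) simp

lemma free_isolated_iff: "free_isolated g x \<longleftrightarrow> vert_isolated (free_cells g) x"
  by (auto simp: free_isolated_def vert_isolated_def free_cells_def split: prod.splits)

lemma vert_live_subset_list: "vert_live (free_cells g) \<subseteq> set (vert_live_list g)"
  using free_cells_subset_positions
  by (auto simp: vert_live_def vert_live_list_def free_isolated_iff free_cells_def)

lemma counting_ok_sound:
  assumes "counting_ok first g"
  shows "if first then wins_first Hepzibah (free_cells g) else wins_second Hepzibah (free_cells g)"
proof -
  let ?xs = "isolated_pairs g"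
  have "distinct (domino_cells Hepzibah ?xs)"
    and "\<forall>y \<in> set (domino_cells Hepzibah ?xs). vert_isolated (free_cells g) y"
    using assms by (auto simp: counting_ok_def Let_def list_all_iff free_isolated_iff)
  note safe_moves = hepzibah_wins_by_safe_moves[OF finite_free_cells this]
  have "card (vert_live (free_cells g)) \<le> length (vert_live_list g)"
    using card_mono[OF _ vert_live_subset_list] card_length order_trans by blast
  then have "card (vert_live (free_cells g)) div 2 \<le> length (vert_live_list g) div 2"
    by (rule div_le_mono)
  then show ?thesis
    using assms safe_moves by (auto simp: counting_ok_def Let_def)
qed

lemma certs_ok_length: "certs_ok g ms ts \<Longrightarrow> length ms = length ts"
  by (induction ms ts rule: list_induct2') auto

lemma certs_ok_append:
  "length ms = length ts \<Longrightarrow>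
     certs_ok g (ms @ ms') (ts @ ts') \<longleftrightarrow> certs_ok g ms ts \<and> certs_ok g ms' ts'"
  by (induction ms ts rule: list_induct2') auto

lemma certs_ok_concat: "list_all2 (certs_ok g) mss tss \<Longrightarrow> certs_ok g (concat mss) (concat tss)"
  by (induction mss tss rule: list_all2_induct) (auto simp: certs_ok_append certs_ok_length)

lemma cert_ok_sound:
  "cert_ok first g t \<Longrightarrow>
     (if first then wins_first Hepzibah (free_cells g) else wins_second Hepzibah (free_cells g))"
  "certs_ok g ms ts \<Longrightarrow> \<forall>m \<in> set ms. wins_first Hepzibah (free_cells g - {m, partner Vera m})"
proof (induction first g t and g ms ts rule: cert_ok_certs_ok.induct)
  case (1 first g)
  then show ?case
    using counting_ok_sound by simp
next
  case (2 first g r c t)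
  have "{(r, c), (r, Suc c)} \<in> moves Hepzibah (free_cells g)"
    using "2.prems" by (auto simp: free_cells_def)
  moreover have "free_cells (fill (fill g (r, c)) (r, Suc c)) = free_cells g - {(r, c), (r, Suc c)}"
    by (auto simp: free_cells_fill)
  ultimately show ?case
    using 2 first by auto
next
  case (3 first g ts)
  have "wins_second Hepzibah (free_cells g)"
  proof (rule second, rule ballI)
    fix d assume "d \<in> moves (opponent Hepzibah) (free_cells g)"
    then obtain r c where d: "d = {(r, c), (Suc r, c)}" "free g (r, c)" "free g (Suc r, c)"
      by (auto simp: free_cells_def)
    then have "(r, c) \<in> set (vert_move_list g)"
      using free_cells_subset_positions by (auto simp: free_cells_def vert_move_list_def)
    then show "wins_first Hepzibah (free_cells g - d)"
      using 3 d by auto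
  qed
  then show ?case
    using "3.prems" by simp
next
  case (5 g m ms t ts)
  have "free_cells (fill (fill g m) (partner Vera m)) = free_cells g - {m, partner Vera m}"
    by (auto simp: free_cells_fill)
  then show ?case
    using 5 by auto
qed auto

lemma board_eq_free_cells: "board m n = free_cells (full_grid m n)"
  by (auto simp: board_def free_cells_def free_def full_grid_def)

lemma finite_board: "finite (board m n)"
  by (simp add: board_eq_free_cells finite_free_cells)

lemma transpose_board: "prod.swap ` board m n = board n m"
  by (auto simp: board_def image_iff)

lemma board_add_cols: "board m (a + b) = board m a \<union> shift_cols a ` board m b"
proof (intro set_eqI iffI)
  fix x assume "x \<in> board m (a + b)"
  then obtain r c where x: "x = (r, c)" "r < m" "c < a + b"
    by (auto simp: board_def)
  show "x \<in> board m a \<union> shift_cols a ` board m b"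
  proof (cases "c < a")
    case True
    then show ?thesis
      using x by (simp add: board_def)
  next
    case False
    then have "x = shift_cols a (r, c - a)" "(r, c - a) \<in> board m b"
      using x by (auto simp: shift_cols_def board_def)
    then show ?thesis
      by blast
  qed
qed (auto simp: board_def shift_cols_def)

lemma column_disjoint_board_shift: "column_disjoint (board m a) (shift_cols a ` board m b)"
  by (auto simp: column_disjoint_def board_def shift_cols_def)

lemma has_outcome_OH_board_add_cols:
  assumes "wins_second Hepzibah (board m a)" and "has_outcome (board m b) OH"
  shows "has_outcome (board m (a + b)) OH"
proof -
  have "wins_first Hepzibah (shift_cols a ` board m b)"
    and "wins_second Hepzibah (shift_cols a ` board m b)"
    using assms(2) wins_shift_cols by simp_all
  then show ?thesis
    using hepzibah_wins_column_disjoint_union[OF finite_board finite_imageI[OF finite_board]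
        column_disjoint_board_shift assms(1)]
    by (simp add: board_add_cols)
qed

lemma has_outcome_OV_board_column:
  assumes "m \<ge> 2"
  shows "has_outcome (board m 1) OV"
proof -
  have second: "wins_second Vera S" if "S \<subseteq> board m 1" for S
    using that by (intro wins_second_if_no_moves) (auto simp: board_def)
  have "{(0, 0), (1, 0)} \<in> moves Vera (board m 1)"
    using assms by (auto simp: board_def)
  moreover have "wins_second Vera (board m 1 - {(0, 0), (1, 0)})"
    by (rule second) auto
  ultimately have "wins_first Vera (board m 1)"
    by (rule first)
  then show ?thesis
    using second by simp
qed

lemma has_outcome_OH_board_5_2: "has_outcome (board 5 2) OH"
proof -
  have first_cert: "cert_ok True (full_grid 5 2)
    (Play 1 0 (Replies [Play 4 0 Leaf, Play 4 0 Leaf, Play 2 0 Leaf, Play 2 0 Leaf]))"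
    by code_simp
  have second_cert: "cert_ok False (full_grid 5 2)
    (Replies [Play 3 0 Leaf, Play 3 0 Leaf, Play 3 0 Leaf, Play 3 0 Leaf,
      Play 1 0 Leaf, Play 1 0 Leaf, Play 1 0 Leaf, Play 1 0 Leaf])"
    by code_simp
  show ?thesis
    using cert_ok_sound(1)[OF first_cert] cert_ok_sound(1)[OF second_cert]
    by (simp add: board_eq_free_cells)
qed

lemma has_outcome_OV_board_5_3: "has_outcome (board 5 3) OV"
proof -
  have first_cert: "cert_ok True (full_grid 3 5)
    (Play 1 0 (Replies [Play 0 3 Leaf, Play 2 2 Leaf, Play 0 2 Leaf, Play 0 2 Leaf, Play 0 2 Leaf, Play 0 2 Leaf]))"
    by code_simp
  have second_cert: "cert_ok False (full_grid 3 5)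
    (Replies
      [Play 1 1 (Replies [Leaf, Leaf, Leaf, Leaf]),
       Play 1 2 (Replies [Leaf, Leaf, Leaf, Leaf]),
       Play 1 0 (Replies [Leaf, Leaf, Leaf, Leaf]),
       Play 1 0 (Replies [Leaf, Leaf, Leaf, Leaf]),
       Play 1 0 (Replies [Leaf, Leaf, Leaf, Leaf]),
       Play 1 1 (Replies [Leaf, Leaf, Leaf, Leaf]),
       Play 1 2 (Replies [Leaf, Leaf, Leaf, Leaf]),
       Play 1 0 (Replies [Leaf, Leaf, Leaf, Leaf]),
       Play 1 0 (Replies [Leaf, Leaf, Leaf, Leaf]),
       Play 1 0 (Replies [Leaf, Leaf, Leaf, Leaf])])"
    by code_simp
  have "wins_first Hepzibah (board 3 5)" "wins_second Hepzibah (board 3 5)"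
    using cert_ok_sound(1)[OF first_cert] cert_ok_sound(1)[OF second_cert]
    by (simp_all add: board_eq_free_cells)
  then show ?thesis
    using wins_first_transpose wins_second_transpose by (fastforce simp: transpose_board)
qed

text \<open>One certificate list per row of Vera's opening move, checked in separate lemmas so that
  the four checks can run in parallel.\<close>
definition replies_5x5 :: "cert list list" where
  "replies_5x5 =
    [[Play 1 1 (Replies [Play 3 0 (Replies [Play 2 2 Leaf, Play 2 2 Leaf, Play 2 3 Leaf, Play 4 2 Leaf, Play 2 2 Leaf, Play 2 2 Leaf, Play 2 2 Leaf, Play 2 2 Leaf]), Play 3 0 (Replies [Play 2 2 Leaf, Play 3 2 Leaf, Play 2 3 Leaf, Play 4 2 Leaf, Play 2 2 Leaf, Play 2 2 Leaf, Play 2 2 Leaf, Play 2 2 Leaf]), Play 3 0 (Replies [Play 3 2 Leaf, Leaf, Play 0 3 Leaf, Play 0 3 Leaf, Play 0 3 Leaf, Play 0 3 Leaf, Play 0 3 Leaf]), Play 3 0 (Replies [Play 2 2 Leaf, Leaf, Play 0 3 Leaf, Play 0 2 Leaf, Play 0 3 Leaf, Play 0 3 Leaf, Play 0 3 Leaf]), Play 3 1 (Replies [Play 2 3 Leaf, Play 2 3 Leaf, Play 0 3 Leaf, Play 0 3 Leaf, Leaf, Play 0 3 Leaf, Play 0 3 Leaf, Play 0 3 Leaf]), Play 1 3 (Replies [Play 2 2 Leaf, Play 2 3 Leaf, Play 4 0 (Replies [Play 4 2 Leaf, Leaf, Leaf, Play 4 3 Leaf, Play 4 2 Leaf]), Play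 3 2 Leaf, Play 3 2 Leaf, Play 3 3 Leaf, Play 2 3 (Replies [Leaf, Leaf, Play 4 1 Leaf, Play 4 0 Leaf, Play 4 0 Leaf]), Play 3 2 Leaf]), Play 3 0 (Replies [Play 2 3 Leaf, Play 2 3 Leaf, Play 0 3 Leaf, Play 0 3 Leaf, Leaf, Play 0 3 Leaf, Play 0 3 Leaf, Play 0 3 Leaf]), Play 3 0 (Replies [Play 4 2 Leaf, Play 4 2 Leaf, Play 0 2 Leaf, Leaf, Leaf, Play 0 2 Leaf, Play 0 3 Leaf]), Play 3 0 (Replies [Play 2 2 Leaf, Play 2 2 Leaf, Play 0 3 Leaf, Play 0 3 Leaf, Leaf, Play 0 3 Leaf, Play 0 3 Leaf]), Play 1 3 (Replies [Play 3 2 Leaf, Play 3 3 Leaf, Play 3 1 Leaf, Play 3 1 Leaf, Play 2 2 Leaf, Play 3 3 Leaf, Play 3 1 Leaf, Play 3 1 Leaf]), Play 3 2 (Replies [Play 2 0 Leaf, Play 2 3 Leaf, Play 0 3 Leaf, Play 0 3 Leaf, Play 0 3 Leaf, Play 0 3 Leaf, Play 0 3 Leaf, Play 0 3 Leaf]), Play 1 3 (Replies [Play 3 3 Leaf, Play 3 3 Leaf, Play 3 0 Leaf, Play 3 0 Leaf, Play 3 3 Leaf, Play 2 3 Leaf, Play 2 0 Leaf, Play 3 0 Leaf]), Play 3 0 (Replies [Play 2 2 Leaf, Play 2 2 Leaf, Play 0 3 Leaf, Play 0 3 Leaf, Play 0 3 Leaf, Play 0 3 Leaf, Play 0 3 Leaf,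 Play 0 3 Leaf]), Play 1 3 (Replies [Play 3 1 Leaf, Play 3 2 Leaf, Play 3 0 Leaf, Play 3 0 Leaf, Play 3 1 Leaf, Play 3 2 Leaf, Play 3 0 Leaf, Play 2 0 Leaf])]),
      Play 1 2 (Replies [Play 3 0 (Replies [Play 2 2 Leaf, Play 2 2 Leaf, Play 2 3 Leaf, Play 4 2 Leaf, Play 2 2 Leaf, Play 2 2 Leaf, Play 2 2 Leaf, Play 2 2 Leaf]), Play 3 1 (Replies [Play 2 3 Leaf, Play 2 3 Leaf, Play 2 3 Leaf, Play 4 0 Leaf, Play 4 3 Leaf, Play 2 3 Leaf, Play 2 0 Leaf, Play 2 3 Leaf]), Play 3 1 (Replies [Play 2 3 Leaf, Play 3 3 Leaf, Play 4 0 Leaf, Play 0 3 Leaf, Play 2 3 Leaf, Play 2 3 Leaf, Play 2 3 Leaf]), Play 3 2 (Replies [Play 2 0 Leaf, Play 3 0 Leaf, Play 4 0 Leaf, Play 4 0 Leaf, Play 2 0 Leaf, Play 2 0 Leaf, Play 2 0 Leaf]), Play 3 1 (Replies [Play 2 3 Leaf, Play 2 3 Leaf, Play 3 3 Leaf, Leaf, Play 0 3 Leaf, Play 2 3 Leaf, Play 2 3 Leaf]), Play 3 2 (Replies [Play 4 0 Leaf, Play 4 0 Leaf, Play 4 0 Leaf, Play 4 0 Leaf, Leaf, Leaf, Play 4 3 Leaf, Play 4 0 Leaf]), Play 3 0 (Replies [Play 2 3 Leaf, Play 3 3 Leaf, Play 3 3 Leaf, Play 3 3 Leaf, Play 2 0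 Leaf, Play 0 3 (Replies [Leaf, Play 4 2 Leaf, Leaf, Play 2 0 Leaf]), Play 2 3 (Replies [Leaf, Play 2 0 Leaf, Play 0 3 Leaf, Play 0 3 Leaf]), Play 2 3 (Replies [Leaf, Play 2 0 Leaf, Play 0 3 Leaf, Play 0 3 Leaf])]), Play 3 1 (Replies [Play 4 0 Leaf, Play 4 0 Leaf, Play 4 0 Leaf, Play 4 0 Leaf, Leaf, Leaf, Play 4 3 Leaf, Play 4 0 Leaf]), Play 3 1 (Replies [Play 4 3 Leaf, Play 4 3 Leaf, Play 0 3 Leaf, Play 0 3 Leaf, Leaf, Play 4 3 Leaf, Play 0 3 Leaf]), Play 3 1 (Replies [Play 2 2 Leaf, Play 2 3 Leaf, Play 2 3 Leaf, Play 3 3 Leaf, Play 4 3 Leaf, Play 4 3 Leaf, Play 2 0 Leaf, Play 2 3 Leaf]), Play 3 2 (Replies [Play 2 0 Leaf, Play 2 0 Leaf, Play 2 3 Leaf, Play 2 0 Leaf, Play 2 3 Leaf, Play 0 3 Leaf, Play 2 0 Leaf, Play 2 0 Leaf]), Play 3 0 (Replies [Play 2 2 Leaf, Play 2 3 Leaf, Play 2 3 Leaf, Play 3 3 Leaf, Play 4 3 Leaf, Play 4 3 Leaf, Play 2 0 Leaf, Play 2 3 Leaf]), Play 3 1 (Replies [Play 2 0 Leaf, Play 2 0 Leaf, Play 2 3 Leaf, Play 2 0 Leaf, Play 2 3 Leaf, Play 0 3 Leaf, Play 2 0 Leaf, Play 2 0 Leaf]), Play 3 2 (Replies [Play 2 0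 Leaf, Play 2 0 Leaf, Play 3 0 Leaf, Play 2 0 Leaf, Play 4 0 Leaf, Play 4 0 Leaf, Play 2 0 Leaf, Play 2 0 Leaf])]),
      Play 1 0 (Replies [Play 3 0 (Replies [Play 2 2 Leaf, Play 2 2 Leaf, Play 2 3 Leaf, Play 4 2 Leaf, Play 2 2 Leaf, Play 2 2 Leaf, Play 2 2 Leaf, Play 2 2 Leaf]), Play 3 0 (Replies [Play 2 2 Leaf, Play 3 2 Leaf, Play 2 3 Leaf, Play 4 2 Leaf, Play 2 2 Leaf, Play 2 2 Leaf, Play 2 2 Leaf, Play 2 2 Leaf]), Play 3 0 (Replies [Play 3 2 Leaf, Leaf, Play 0 3 Leaf, Play 0 3 Leaf, Play 0 3 Leaf, Play 0 3 Leaf, Play 0 3 Leaf]), Play 3 0 (Replies [Play 2 2 Leaf, Leaf, Play 0 3 Leaf, Play 0 3 Leaf, Play 0 3 Leaf, Play 0 3 Leaf, Play 0 3 Leaf]), Play 3 1 (Replies [Play 2 3 Leaf, Play 2 3 Leaf, Play 0 3 Leaf, Play 0 3 Leaf, Leaf, Play 0 3 Leaf, Play 0 3 Leaf, Play 0 3 Leaf]), Play 1 3 (Replies [Play 2 2 Leaf, Play 2 3 Leaf, Play 4 0 (Replies [Play 4 2 Leaf, Leaf, Leaf, Play 4 3 Leaf, Play 4 2 Leaf]), Play 3 2 Leaf, Play 3 2 Leaf, Play 3 3 Leaf, Play 2 3 (Replies [Leaf, Leaf, Play 4 1 Leaf, Play 4 0 Leaf, Play 4 0 Leaf]), Play 3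 2 Leaf]), Play 3 0 (Replies [Play 2 3 Leaf, Play 2 3 Leaf, Play 0 3 Leaf, Play 0 3 Leaf, Leaf, Play 0 3 Leaf, Play 0 3 Leaf, Play 0 3 Leaf]), Play 3 0 (Replies [Play 4 2 Leaf, Play 4 2 Leaf, Play 0 3 Leaf, Leaf, Leaf, Play 0 3 Leaf, Play 0 3 Leaf]), Play 3 0 (Replies [Play 2 2 Leaf, Play 2 2 Leaf, Play 0 3 Leaf, Play 0 3 Leaf, Leaf, Play 0 3 Leaf, Play 0 3 Leaf]), Play 1 3 (Replies [Play 3 2 Leaf, Play 3 3 Leaf, Play 3 1 Leaf, Play 3 1 Leaf, Play 2 2 Leaf, Play 3 3 Leaf, Play 3 1 Leaf, Play 3 1 Leaf]), Play 3 2 (Replies [Play 2 0 Leaf, Play 2 3 Leaf, Play 0 3 Leaf, Play 0 3 Leaf, Play 0 3 Leaf, Play 0 3 Leaf, Play 0 3 Leaf, Play 0 3 Leaf]), Play 1 3 (Replies [Play 3 3 Leaf, Play 3 3 Leaf, Play 3 0 Leaf, Play 3 0 Leaf, Play 3 3 Leaf, Play 2 3 Leaf, Play 2 0 Leaf, Play 3 0 Leaf]), Play 3 0 (Replies [Play 2 2 Leaf, Play 2 2 Leaf, Play 0 3 Leaf, Play 0 3 Leaf, Play 0 3 Leaf, Play 0 3 Leaf, Play 0 3 Leaf, Play 0 3 Leaf]), Play 1 3 (Replies [Play 3 1 Leaf, Play 3 2 Leaf, Play 3 0 Leaf, Play 3 0 Leaf, Play 3 1 Leaf, Play 3 2 Leaf,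 Play 3 0 Leaf, Play 2 0 Leaf])]),
      Play 1 1 (Replies [Play 3 0 (Replies [Play 2 2 Leaf, Play 2 2 Leaf, Play 2 3 Leaf, Play 4 2 Leaf, Play 2 2 Leaf, Play 2 2 Leaf, Play 2 2 Leaf, Play 2 2 Leaf]), Play 3 1 (Replies [Play 2 3 Leaf, Play 2 3 Leaf, Play 2 3 Leaf, Play 4 0 Leaf, Play 4 3 Leaf, Play 2 3 Leaf, Play 2 0 Leaf, Play 2 3 Leaf]), Play 3 1 (Replies [Play 2 3 Leaf, Play 3 3 Leaf, Play 4 0 Leaf, Play 4 0 Leaf, Play 2 3 Leaf, Play 2 3 Leaf, Play 2 3 Leaf]), Play 3 2 (Replies [Play 2 0 Leaf, Play 3 0 Leaf, Play 0 0 Leaf, Play 4 0 Leaf, Play 2 0 Leaf, Play 2 0 Leaf, Play 2 0 Leaf]), Play 3 1 (Replies [Play 2 3 Leaf, Play 2 3 Leaf, Play 0 0 Leaf, Leaf, Play 0 0 Leaf, Play 0 0 Leaf, Play 2 3 Leaf]), Play 3 2 (Replies [Play 4 0 Leaf, Play 4 0 Leaf, Play 4 0 Leaf, Play 4 0 Leaf, Leaf, Leaf, Play 4 3 Leaf, Play 4 0 Leaf]), Play 3 3 (Replies [Play 3 0 Leaf, Play 2 0 Leaf, Play 3 0 Leaf, Play 3 0 Leaf, Play 0 0 (Replies [Leaf, Play 4 0 Leaf, Leaf, Play 2 3 Leaf]), Play 2 3 Leaf, Play 2 0 (Replies [Play 2 3 Leaf, Leaf, Play 0 0 Leaf, Play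 0 0 Leaf]), Play 2 0 (Replies [Play 2 3 Leaf, Leaf, Play 0 0 Leaf, Play 0 0 Leaf])]), Play 3 1 (Replies [Play 4 0 Leaf, Play 4 0 Leaf, Play 4 0 Leaf, Play 4 0 Leaf, Leaf, Leaf, Play 4 3 Leaf, Play 4 0 Leaf]), Play 3 1 (Replies [Play 4 3 Leaf, Play 4 3 Leaf, Play 4 0 Leaf, Play 0 0 Leaf, Leaf, Play 4 3 Leaf, Play 2 0 Leaf]), Play 3 1 (Replies [Play 2 2 Leaf, Play 2 3 Leaf, Play 2 3 Leaf, Play 3 3 Leaf, Play 4 3 Leaf, Play 4 3 Leaf, Play 2 0 Leaf, Play 2 3 Leaf]), Play 3 2 (Replies [Play 2 0 Leaf, Play 2 0 Leaf, Play 2 3 Leaf, Play 2 0 Leaf, Play 0 0 Leaf, Play 2 0 Leaf, Play 2 0 Leaf, Play 2 0 Leaf]), Play 3 0 (Replies [Play 2 2 Leaf, Play 2 3 Leaf, Play 2 3 Leaf, Play 3 3 Leaf, Play 4 3 Leaf, Play 4 3 Leaf, Play 2 0 Leaf, Play 2 3 Leaf]), Play 3 1 (Replies [Play 2 0 Leaf, Play 2 0 Leaf, Play 2 3 Leaf, Play 2 0 Leaf, Play 0 0 Leaf, Play 2 0 Leaf, Play 2 0 Leaf, Play 2 0 Leaf]), Play 3 2 (Replies [Play 2 0 Leaf, Play 2 0 Leaf, Play 3 0 Leaf, Play 2 0 Leaf, Play 4 0 Leaf, Play 4 0 Leaf, Play 2 0 Leaf, Play 2 0 Leaf])]),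
      Play 1 2 (Replies [Play 3 2 (Replies [Play 2 0 Leaf, Play 3 0 Leaf, Play 4 0 Leaf, Play 4 0 Leaf, Play 2 0 Leaf, Play 2 0 Leaf, Play 2 0 Leaf, Play 2 0 Leaf]), Play 3 1 (Replies [Play 2 3 Leaf, Play 2 3 Leaf, Play 2 3 Leaf, Play 4 0 Leaf, Play 4 3 Leaf, Play 2 3 Leaf, Play 2 0 Leaf, Play 2 3 Leaf]), Play 3 2 (Replies [Play 3 0 Leaf, Leaf, Play 0 0 Leaf, Play 0 0 Leaf, Play 0 0 Leaf, Play 0 0 Leaf, Play 0 0 Leaf]), Play 3 2 (Replies [Play 3 0 Leaf, Leaf, Play 0 0 Leaf, Play 0 0 Leaf, Play 0 0 Leaf, Play 0 0 Leaf, Play 0 0 Leaf]), Play 3 2 (Replies [Play 4 0 Leaf, Play 4 0 Leaf, Play 0 0 Leaf, Leaf, Play 0 0 Leaf, Play 0 0 Leaf, Play 0 0 Leaf]), Play 3 2 (Replies [Play 4 0 Leaf, Play 4 0 Leaf, Play 0 0 Leaf, Leaf, Leaf, Play 0 0 Leaf, Play 0 0 Leaf]), Play 3 3 (Replies [Play 2 0 Leaf, Play 2 0 Leaf, Play 0 0 Leaf, Play 0 0 Leaf, Play 0 0 Leaf, Leaf, Play 0 0 Leaf, Play 0 0 Leaf]), Play 1 0 (Replies [Play 3 1 Leaf, Play 4 0 (Replies [Play 4 2 Leaf, Leaf, Leaf, Play 4 3 Leaf, Play 4 2 Leaf]), Play 2 0 Leaf, Play 2 0 Leaf, Play 3 1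 Leaf, Play 2 0 (Replies [Leaf, Leaf, Play 4 2 Leaf, Play 4 3 Leaf, Play 4 2 Leaf]), Play 3 0 Leaf, Play 3 0 Leaf]), Play 3 2 (Replies [Play 2 0 Leaf, Play 2 0 Leaf, Play 0 0 Leaf, Play 0 0 Leaf, Play 0 0 Leaf, Leaf, Play 0 0 Leaf, Play 0 0 Leaf]), Play 1 0 (Replies [Play 3 2 Leaf, Play 3 3 Leaf, Play 3 1 Leaf, Play 3 1 Leaf, Play 2 2 Leaf, Play 3 3 Leaf, Play 3 1 Leaf, Play 3 1 Leaf]), Play 3 2 (Replies [Play 2 0 Leaf, Play 2 0 Leaf, Play 0 0 Leaf, Play 0 0 Leaf, Play 0 0 Leaf, Play 0 0 Leaf, Play 0 0 Leaf, Play 0 0 Leaf]), Play 1 0 (Replies [Play 3 3 Leaf, Play 3 3 Leaf, Play 3 0 Leaf, Play 3 0 Leaf, Play 3 3 Leaf, Play 2 3 Leaf, Play 2 0 Leaf, Play 3 0 Leaf]), Play 3 1 (Replies [Play 2 0 Leaf, Play 2 0 Leaf, Play 0 0 Leaf, Play 0 0 Leaf, Play 0 0 Leaf, Play 0 0 Leaf, Play 0 0 Leaf, Play 0 0 Leaf]), Play 1 0 (Replies [Play 3 1 Leaf, Play 3 2 Leaf, Play 3 0 Leaf, Play 3 0 Leaf, Play 3 1 Leaf, Play 3 2 Leaf, Play 3 0 Leaf, Play 2 0 Leaf])])],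
     [Play 1 1 (Replies [Play 3 1 (Replies [Play 2 3 Leaf, Play 3 3 Leaf, Play 4 0 Leaf, Play 4 0 Leaf, Play 2 3 Leaf, Play 2 3 Leaf, Play 2 3 Leaf]), Play 3 1 (Replies [Play 2 3 Leaf, Leaf, Play 0 2 Leaf, Play 0 2 Leaf, Play 0 2 Leaf, Play 0 2 Leaf, Play 0 2 Leaf]), Play 3 1 Leaf, Play 3 1 (Replies [Play 3 3 Leaf, Leaf, Play 0 2 Leaf, Play 0 2 Leaf, Play 0 2 Leaf, Play 0 2 Leaf]), Play 3 2 (Replies [Play 4 0 Leaf, Play 4 0 (Replies [Leaf, Leaf, Leaf, Leaf]), Play 4 0 Leaf, Play 4 0 Leaf, Play 0 2 Leaf, Play 1 3 Leaf, Play 1 3 Leaf]), Play 1 3 (Replies [Play 2 3 Leaf, Play 3 0 Leaf, Play 3 0 Leaf, Play 3 3 Leaf, Play 3 3 Leaf, Play 3 0 Leaf, Play 3 0 Leaf]), Play 3 1 (Replies [Play 4 0 Leaf, Play 0 2 Leaf, Play 0 2 Leaf, Leaf, Play 0 2 Leaf, Play 0 2 Leaf]), Play 3 1 (Replies [Play 4 0 Leaf, Play 0 2 Leaf, Leaf, Leaf, Play 0 2 Leaf, Play 0 2 Leaf]), Play 3 1 (Replies [Play 2 3 Leaf, Play 0 2 Leaf, Leaf, Play 0 2 Leaf, Play 0 2 Leaf, Play 0 2 Leaf, Play 0 2 Leaf, Play 0 2 Leaf]), Play 3 2 (Replies [Play 2 3 Leaf, Play 0 2 Leaf, Leaf, Play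 0 2 Leaf, Play 0 2 Leaf, Play 0 2 Leaf, Play 0 2 Leaf]), Play 1 3 (Replies [Play 3 3 Leaf, Play 3 0 Leaf, Play 3 0 Leaf, Play 3 3 Leaf, Play 2 3 Leaf, Play 3 0 Leaf, Play 3 0 Leaf]), Play 3 1 (Replies [Play 2 3 Leaf, Play 0 2 Leaf, Leaf, Play 0 2 Leaf, Play 0 2 Leaf, Play 0 2 Leaf, Play 0 2 Leaf]), Play 3 1 (Replies [Play 2 3 Leaf, Play 0 2 Leaf, Leaf, Play 0 2 Leaf, Play 0 2 Leaf, Play 0 2 Leaf, Play 0 2 Leaf])]),
      Play 1 2 (Replies [Play 3 2 (Replies [Play 3 0 Leaf, Leaf, Play 0 3 Leaf, Play 0 3 Leaf, Play 0 3 Leaf, Play 0 3 Leaf, Play 0 3 Leaf]), Play 3 2 (Replies [Play 3 0 Leaf, Leaf, Play 0 0 Leaf, Play 0 0 Leaf, Play 0 0 Leaf, Play 0 0 Leaf, Play 0 0 Leaf]), Play 3 2 Leaf, Play 3 2 Leaf, Play 3 2 (Replies [Play 0 3 Leaf, Play 0 0 Leaf, Leaf, Play 0 0 Leaf, Play 0 0 Leaf, Play 0 0 Leaf]), Play 3 3 (Replies [Play 3 0 Leaf, Play 0 0 Leaf, Play 2 3 Leaf, Play 3 0 Leaf, Play 0 0 Leaf, Play 4 1 (Replies [Leaf, Leaf, Leaf, Leaf]), Play 2 3 (Replies [Play 0 3 Leaf, Play 0 0 Leaf, Leaf, Play 0 0 Leaf, Play 0 0 Leaf])]), Play 3 0 (Replies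 [Play 0 3 (Replies [Play 4 2 Leaf, Leaf, Leaf, Play 4 3 Leaf, Play 4 2 Leaf]), Play 0 0 (Replies [Play 4 2 Leaf, Leaf, Leaf, Play 4 3 Leaf, Play 4 2 Leaf]), Play 4 2 Leaf, Play 4 2 Leaf, Play 0 0 Leaf, Play 0 0 Leaf, Play 4 3 (Replies [Play 0 3 Leaf, Play 0 0 Leaf, Leaf, Leaf, Play 0 0 Leaf]), Play 4 2 (Replies [Play 0 3 Leaf, Play 0 0 Leaf, Leaf, Leaf, Play 0 0 Leaf])]), Play 3 2 (Replies [Play 0 3 Leaf, Play 0 0 Leaf, Leaf, Play 0 0 Leaf, Play 0 0 Leaf, Play 0 0 Leaf]), Play 3 2 (Replies [Play 0 3 Leaf, Play 0 0 Leaf, Leaf, Leaf, Play 0 0 Leaf, Play 0 0 Leaf, Play 0 0 Leaf]), Play 3 2 (Replies [Play 0 3 Leaf, Play 0 0 Leaf, Leaf, Leaf, Play 0 0 Leaf, Play 0 0 Leaf, Play 0 0 Leaf, Play 0 0 Leaf]), Play 3 3 (Replies [Play 0 3 Leaf, Play 0 0 Leaf, Leaf, Leaf, Play 0 0 Leaf, Play 0 0 Leaf, Play 0 0 Leaf]), Play 3 1 (Replies [Play 0 3 Leaf, Play 0 0 Leaf, Leaf, Leaf, Play 0 0 Leaf, Play 0 0 Leaf, Play 0 0 Leaf, Play 0 0 Leaf]), Play 3 2 (Replies [Play 0 3 Leaf, Play 0 0 Leaf, Leaf, Leaf, Play 0 0 Leaf, Play 0 0 Leaf, Play 0 0 Le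af])]),
      Play 1 0 (Replies [Play 3 0 (Replies [Play 2 3 Leaf, Play 3 2 Leaf, Play 4 1 Leaf, Play 3 2 Leaf, Play 2 3 Leaf, Play 2 3 Leaf, Play 2 3 Leaf]), Play 3 0 (Replies [Play 2 3 Leaf, Leaf, Play 0 2 Leaf, Play 0 2 Leaf, Play 0 2 Leaf, Play 0 2 Leaf, Play 0 2 Leaf]), Play 3 0 Leaf, Play 3 0 (Replies [Play 3 2 Leaf, Leaf, Play 0 2 Leaf, Play 0 2 Leaf, Play 0 2 Leaf, Play 0 2 Leaf]), Play 1 3 (Replies [Play 2 3 Leaf, Play 3 1 Leaf, Play 3 1 Leaf, Play 3 2 Leaf, Play 3 3 Leaf, Play 3 1 Leaf, Play 3 1 Leaf]), Play 1 3 (Replies [Play 2 3 Leaf, Play 4 1 (Replies [Leaf, Leaf, Leaf, Leaf]), Play 3 2 Leaf, Play 3 2 Leaf, Play 3 3 Leaf, Play 4 1 (Replies [Leaf, Leaf, Leaf, Leaf]), Play 3 2 Leaf]), Play 3 0 (Replies [Play 4 1 Leaf, Play 0 2 Leaf, Play 0 2 Leaf, Leaf, Play 0 2 Leaf, Play 0 2 Leaf]), Play 3 0 (Replies [Play 3 2 Leaf, Play 0 2 Leaf, Leaf, Leaf, Play 0 2 Leaf, Play 0 2 Leaf]), Play 1 3 (Replies [Play 3 2 Leaf, Play 3 1 Leaf, Play 3 1 Leaf, Play 2 3 Leaf, Play 3 3 Leaf, Play 3 1 Leaf, Play 3 1 Leaf]), Play 3 3 (Replies [Play 4 2 (Replies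 [Leaf, Play 2 0 Leaf, Play 2 3 Leaf, Leaf]), Play 4 2 (Replies [Leaf, Leaf, Play 0 2 Leaf, Leaf]), Play 2 0 Leaf, Play 4 2 (Replies [Play 2 0 Leaf, Leaf, Play 0 2 Leaf, Leaf]), Play 1 3 Leaf, Play 0 2 Leaf, Play 1 3 Leaf]), Play 3 0 (Replies [Play 2 3 Leaf, Play 0 2 Leaf, Leaf, Play 0 2 Leaf, Play 0 2 Leaf, Play 0 2 Leaf, Play 0 2 Leaf, Play 0 2 Leaf]), Play 3 0 (Replies [Play 2 3 Leaf, Play 0 2 Leaf, Leaf, Play 0 2 Leaf, Play 0 2 Leaf, Play 0 2 Leaf, Play 0 2 Leaf]), Play 3 0 (Replies [Play 2 3 Leaf, Play 0 2 Leaf, Leaf, Play 0 2 Leaf, Play 0 2 Leaf, Play 0 2 Leaf, Play 0 2 Leaf])]),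
      Play 1 1 (Replies [Play 3 0 (Replies [Play 3 2 Leaf, Leaf, Play 0 3 Leaf, Play 0 3 Leaf, Play 0 3 Leaf, Play 0 3 Leaf, Play 0 3 Leaf]), Play 3 1 (Replies [Play 3 3 Leaf, Leaf, Play 0 0 Leaf, Play 0 0 Leaf, Play 0 0 Leaf, Play 0 0 Leaf, Play 0 0 Leaf]), Play 3 1 Leaf, Play 3 1 Leaf, Play 3 1 (Replies [Play 0 3 Leaf, Play 0 0 Leaf, Leaf, Play 0 0 Leaf, Play 0 0 Leaf, Play 0 0 Leaf]), Play 3 2 (Replies [Play 0 3 (Replies [Play 4 0 Leaf, Leaf, Leaf, Play 4 3 Leaf, Play 4 0 Leaf]), Play 0 0 (Replies [Play 4 0 Leaf, Leaf, Leaf, Play 4 3 Leaf, Play 4 0 Leaf]), Play 4 0 Leaf, Play 4 0 Leaf, Play 0 0 Leaf, Play 0 0 Leaf, Play 4 3 (Replies [Play 0 3 Leaf, Play 0 0 Leaf, Leaf, Leaf, Play 0 0 Leaf]), Play 4 0 (Replies [Play 0 3 Leaf, Play 0 0 Leaf, Leaf, Leaf, Play 0 0 Leaf])]), Play 3 0 (Replies [Play 0 3 Leaf, Play 3 3 Leaf, Play 3 3 Leaf, Play 2 0 Leaf, Play 0 3 Leaf, Play 2 0 (Replies [Play 0 3 Leaf, Play 0 0 Leaf, Leaf, Play 0 0 Leaf, Play 0 0 Leaf]), Play 4 2 (Replies [Leaf, Leaf, Leaf, Leaf])]), Play 3 1 (Replies [Play 0 3 Leaf, Play 0 0 Leaf,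 Leaf, Play 0 0 Leaf, Play 0 0 Leaf, Play 0 0 Leaf]), Play 3 1 (Replies [Play 0 3 Leaf, Play 0 0 Leaf, Leaf, Leaf, Play 0 0 Leaf, Play 0 0 Leaf, Play 0 0 Leaf]), Play 3 2 (Replies [Play 0 3 Leaf, Play 0 0 Leaf, Leaf, Leaf, Play 0 0 Leaf, Play 0 0 Leaf, Play 0 0 Leaf, Play 0 0 Leaf]), Play 3 0 (Replies [Play 0 3 Leaf, Play 0 0 Leaf, Leaf, Leaf, Play 0 0 Leaf, Play 0 0 Leaf, Play 0 0 Leaf]), Play 3 1 (Replies [Play 0 3 Leaf, Play 0 0 Leaf, Leaf, Leaf, Play 0 0 Leaf, Play 0 0 Leaf, Play 0 0 Leaf, Play 0 0 Leaf]), Play 3 1 (Replies [Play 0 3 Leaf, Play 0 0 Leaf, Leaf, Leaf, Play 0 0 Leaf, Play 0 0 Leaf, Play 0 0 Leaf])]),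
      Play 1 2 (Replies [Play 3 2 (Replies [Play 2 0 Leaf, Leaf, Play 0 1 Leaf, Play 0 1 Leaf, Play 0 1 Leaf, Play 0 1 Leaf, Play 0 1 Leaf]), Play 3 2 (Replies [Play 2 0 Leaf, Play 3 0 Leaf, Play 4 0 Leaf, Play 4 0 Leaf, Play 2 0 Leaf, Play 2 0 Leaf, Play 2 0 Leaf]), Play 3 2 (Replies [Play 3 0 Leaf, Leaf, Play 0 0 Leaf, Play 0 0 Leaf, Play 0 0 Leaf, Play 0 0 Leaf]), Play 3 2 Leaf, Play 3 2 (Replies [Play 0 1 Leaf, Play 4 0 Leaf, Leaf, Leaf, Play 0 0 Leaf, Play 0 0 Leaf]), Play 3 2 (Replies [Play 0 1 Leaf, Play 4 0 Leaf, Play 0 0 Leaf, Leaf, Play 0 0 Leaf, Play 0 0 Leaf]), Play 1 0 (Replies [Play 3 3 Leaf, Play 3 3 Leaf, Play 2 0 Leaf, Play 3 3 Leaf, Play 3 3 Leaf, Play 3 0 Leaf, Play 3 0 Leaf]), Play 3 1 (Replies [Play 4 3 (Replies [Leaf, Leaf, Leaf, Leaf]), Play 4 0 Leaf, Play 4 0 Leaf, Play 4 0 Leaf, Play 0 0 Leaf, Play 1 0 Leaf, Play 1 0 Leaf]), Play 3 2 (Replies [Play 0 1 Leaf, Play 2 0 Leaf, Play 0 0 Leaf, Leaf, Play 0 0 Leaf, Play 0 0 Leaf, Play 0 0 Leaf]), Play 3 2 (Replies [Play 0 1 Leaf, Play 2 0 Leaf, Play 0 0 Leaf, Leaf, Play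 0 0 Leaf, Play 0 0 Leaf, Play 0 0 Leaf]), Play 1 0 (Replies [Play 3 3 Leaf, Play 3 3 Leaf, Play 3 0 Leaf, Play 3 3 Leaf, Play 3 3 Leaf, Play 2 0 Leaf, Play 3 0 Leaf]), Play 3 1 (Replies [Play 0 1 Leaf, Play 2 0 Leaf, Play 0 0 Leaf, Leaf, Play 0 0 Leaf, Play 0 0 Leaf, Play 0 0 Leaf]), Play 3 2 (Replies [Play 0 1 Leaf, Play 2 0 Leaf, Play 0 0 Leaf, Leaf, Play 0 0 Leaf, Play 0 0 Leaf, Play 0 0 Leaf, Play 0 0 Leaf])])],
     [Play 3 1 (Replies [Play 1 1 (Replies [Play 2 3 Leaf, Play 2 3 Leaf, Play 0 3 Leaf, Play 0 3 Leaf, Leaf, Play 0 3 Leaf, Play 0 3 Leaf, Play 0 3 Leaf]), Play 1 2 (Replies [Play 2 3 Leaf, Play 2 3 Leaf, Play 3 3 Leaf, Leaf, Play 0 3 Leaf, Play 2 3 Leaf, Play 2 3 Leaf]), Play 1 3 (Replies [Play 3 3 Leaf, Play 2 3 Leaf, Play 3 3 Leaf, Play 0 0 Leaf, Play 0 0 Leaf, Play 0 0 Leaf, Play 0 0 Leaf]), Play 1 1 (Replies [Play 2 3 Leaf, Play 2 3 Leaf, Play 0 0 Leaf, Leaf, Play 0 0 Leaf, Play 0 0 Leaf, Play 2 3 Leaf]), Play 1 1 (Replies [Play 2 3 Leaf, Play 2 3 Leaf, Play 0 0 Leaf, Leaf, Play 0 0 Leaf, Play 2 3 Leaf, Play 0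 0 Leaf]), Play 1 2 (Replies [Play 3 3 Leaf, Play 3 3 Leaf, Play 0 0 Leaf, Play 0 0 Leaf, Play 0 0 Leaf, Play 0 0 Leaf, Play 0 0 (Replies [Leaf, Leaf, Leaf, Leaf])]), Play 1 3 (Replies [Play 3 3 Leaf, Play 3 3 Leaf, Play 2 3 Leaf, Play 0 0 Leaf, Play 0 0 Leaf, Play 0 0 Leaf, Play 0 0 Leaf]), Play 1 1 (Replies [Play 0 3 Leaf, Play 0 0 Leaf, Leaf, Play 0 0 Leaf, Play 0 0 Leaf, Play 0 0 Leaf]), Play 1 1 (Replies [Play 0 3 Leaf, Play 0 0 Leaf, Leaf, Leaf, Play 0 0 Leaf, Play 0 0 Leaf]), Play 1 1 Leaf, Play 1 1 (Replies [Play 0 3 Leaf, Play 0 0 Leaf, Play 0 0 Leaf, Play 0 0 Leaf, Leaf, Play 0 0 Leaf]), Play 1 1 (Replies [Play 0 3 Leaf, Play 0 0 Leaf, Play 2 3 Leaf, Play 0 0 Leaf, Play 0 0 Leaf, Play 0 0 Leaf, Play 0 3 Leaf]), Play 1 1 (Replies [Play 0 3 Leaf, Play 2 3 Leaf, Play 0 0 Leaf, Play 0 0 Leaf, Play 0 0 Leaf, Leaf, Play 0 3 Leaf])]),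
      Play 3 2 (Replies [Play 1 2 (Replies [Play 4 0 Leaf, Play 4 0 Leaf, Play 0 1 Leaf, Leaf, Leaf, Play 0 1 Leaf, Play 4 0 Leaf]), Play 1 2 (Replies [Play 4 0 Leaf, Play 4 0 Leaf, Play 4 0 Leaf, Play 4 0 Leaf, Leaf, Leaf, Play 4 3 Leaf, Play 4 0 Leaf]), Play 1 3 (Replies [Play 4 0 Leaf, Play 4 0 Leaf, Play 0 0 Leaf, Leaf, Leaf, Play 0 0 Leaf, Play 0 0 Leaf]), Play 1 1 (Replies [Play 4 0 Leaf, Play 4 0 Leaf, Play 4 0 Leaf, Play 4 0 Leaf, Leaf, Leaf, Play 4 3 Leaf, Play 4 0 Leaf]), Play 1 2 (Replies [Play 4 0 Leaf, Play 4 0 Leaf, Play 0 0 Leaf, Leaf, Leaf, Play 0 0 Leaf, Play 0 0 Leaf]), Play 1 2 (Replies [Play 4 0 Leaf, Play 0 0 Leaf, Play 0 0 Leaf, Leaf, Play 0 0 Leaf, Play 0 0 Leaf]), Play 1 3 (Replies [Play 0 1 (Replies [Leaf, Leaf, Leaf, Leaf]), Play 2 3 (Replies [Play 4 0 Leaf, Play 4 0 Leaf, Leaf, Play 4 3 Leaf, Play 4 0 Leaf]), Play 0 0 Leaf, Play 0 0 Leaf, Play 0 0 Leaf, Play 0 0 Leaf, Play 0 0 Leaf]), Play 1 0 (Replies [Play 0 3 (Replies [Play 4 0 Leaf, Leaf, Leaf, Play 4 3 Leaf, Play 4 0 Leaf]), Play 0 2 (Replies [Play 4 0 Leaf, Leaf,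 Leaf, Play 4 3 Leaf, Play 4 0 Leaf]), Play 4 0 Leaf, Play 4 0 Leaf, Play 0 2 Leaf, Play 0 2 Leaf, Play 4 3 (Replies [Play 0 3 Leaf, Play 0 2 Leaf, Leaf, Leaf, Play 0 2 Leaf]), Play 4 0 (Replies [Play 0 3 Leaf, Play 0 2 Leaf, Leaf, Leaf, Play 0 2 Leaf])]), Play 1 2 (Replies [Play 0 1 Leaf, Play 4 0 Leaf, Play 0 0 Leaf, Leaf, Play 0 0 Leaf, Play 0 0 Leaf]), Play 1 2 Leaf, Play 1 2 Leaf, Play 1 2 (Replies [Play 0 1 Leaf, Play 4 3 Leaf, Play 0 0 Leaf, Play 0 0 Leaf, Play 0 0 Leaf, Leaf, Play 0 0 Leaf]), Play 1 2 (Replies [Play 4 0 Leaf, Play 4 0 Leaf, Play 0 0 Leaf, Play 0 0 Leaf, Play 0 0 Leaf, Leaf, Play 0 0 Leaf])]),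
      Play 3 0 (Replies [Play 1 3 (Replies [Play 2 3 Leaf, Play 3 3 Leaf, Play 3 3 Leaf, Play 0 1 Leaf, Play 0 1 Leaf, Play 0 1 Leaf, Play 0 1 Leaf]), Play 1 3 (Replies [Play 2 3 Leaf, Play 3 3 Leaf, Play 3 3 Leaf, Play 2 0 Leaf, Play 0 2 (Replies [Leaf, Play 4 2 Leaf, Leaf, Play 2 0 Leaf]), Play 0 2 (Replies [Leaf, Play 2 3 Leaf, Play 2 0 Leaf, Leaf]), Play 0 2 (Replies [Leaf, Play 2 3 Leaf, Leaf, Leaf])]), Play 1 0 (Replies [Play 2 3 Leaf, Play 2 3 Leaf, Play 0 3 Leaf, Play 0 3 Leaf, Leaf, Play 0 3 Leaf, Play 0 3 Leaf, Play 0 3 Leaf]), Play 1 0 (Replies [Play 2 3 Leaf, Play 2 3 Leaf, Play 0 1 Leaf, Leaf, Play 0 1 Leaf, Play 0 1 Leaf, Play 2 3 Leaf]), Play 1 0 (Replies [Play 2 3 Leaf, Play 2 3 Leaf, Play 0 1 Leaf, Leaf, Play 0 1 Leaf, Play 0 2 Leaf, Play 0 1 Leaf]), Play 1 3 (Replies [Play 3 3 Leaf, Play 3 3 Leaf, Play 2 3 Leaf, Play 0 0 Leaf, Play 0 1 Leaf, Play 0 1 Leaf, Play 0 1 Leaf]), Play 3 3 (Replies [Play 0 2 Leaf, Play 1 3 Leaf, Play 0 1 (Replies [Leaf, Leaf, Leaf, Leaf]), Play 0 2 Leaf, Play 0 2 Leaf, Play 0 1 (Replies [Leaf, Leaf,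 Leaf, Leaf]), Play 0 2 Leaf]), Play 1 0 (Replies [Play 0 3 Leaf, Play 0 1 Leaf, Leaf, Play 0 1 Leaf, Play 0 1 Leaf, Play 0 1 Leaf]), Play 1 0 (Replies [Play 0 3 Leaf, Play 0 1 Leaf, Leaf, Leaf, Play 0 1 Leaf, Play 0 1 Leaf]), Play 1 0 Leaf, Play 1 0 (Replies [Play 0 3 Leaf, Play 0 1 Leaf, Play 0 1 Leaf, Play 0 1 Leaf, Leaf, Play 0 1 Leaf]), Play 1 0 (Replies [Play 0 3 Leaf, Play 0 1 Leaf, Play 0 2 Leaf, Play 0 1 Leaf, Play 0 1 Leaf, Play 0 1 Leaf, Play 0 2 Leaf]), Play 1 0 (Replies [Play 0 3 Leaf, Play 2 3 Leaf, Play 0 1 Leaf, Play 0 1 Leaf, Play 0 1 Leaf, Leaf, Play 0 2 Leaf])]),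
      Play 3 1 (Replies [Play 1 1 (Replies [Play 4 0 Leaf, Play 4 0 Leaf, Play 0 2 Leaf, Leaf, Leaf, Play 0 2 Leaf, Play 0 3 Leaf]), Play 1 2 (Replies [Play 4 0 Leaf, Play 4 0 Leaf, Play 4 0 Leaf, Play 4 0 Leaf, Leaf, Leaf, Play 4 3 Leaf, Play 4 0 Leaf]), Play 1 0 (Replies [Play 4 0 Leaf, Play 4 0 Leaf, Play 0 3 Leaf, Leaf, Leaf, Play 0 3 Leaf, Play 0 3 Leaf]), Play 1 1 (Replies [Play 4 0 Leaf, Play 4 0 Leaf, Play 4 0 Leaf, Play 4 0 Leaf, Leaf, Leaf, Play 4 3 Leaf, Play 4 0 Leaf]), Play 1 1 (Replies [Play 4 0 Leaf, Play 4 0 Leaf, Play 0 2 Leaf, Leaf, Leaf, Play 4 3 Leaf, Play 0 2 Leaf]), Play 1 1 (Replies [Play 4 0 Leaf, Play 0 2 Leaf, Play 0 2 Leaf, Leaf, Play 0 2 Leaf, Play 0 2 Leaf]), Play 1 2 (Replies [Play 0 3 (Replies [Play 4 0 Leaf, Leaf, Leaf, Play 4 3 Leaf, Play 4 0 Leaf]), Play 0 0 (Replies [Play 4 0 Leaf, Leaf, Leaf, Play 4 3 Leaf, Play 4 0 Leaf]), Play 4 0 Leaf, Play 4 0 Leaf, Play 0 0 Leaf, Play 0 0 Leaf, Play 4 3 (Replies [Play 0 3 Leaf, Play 0 0 Leaf, Leaf, Leaf, Play 0 0 Leaf]), Play 4 0 (Replies [Play 0 3 Leaf, Play 0 0 Leaf,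 Leaf, Leaf, Play 0 0 Leaf])]), Play 1 0 (Replies [Play 2 0 (Replies [Play 4 0 Leaf, Play 4 0 Leaf, Leaf, Play 4 3 Leaf, Play 4 0 Leaf]), Play 0 2 (Replies [Leaf, Leaf, Leaf, Leaf]), Play 0 2 Leaf, Play 0 2 Leaf, Play 0 2 Leaf, Play 0 2 Leaf, Play 0 3 Leaf]), Play 1 1 (Replies [Play 0 2 Leaf, Play 4 0 Leaf, Play 0 2 Leaf, Leaf, Play 0 2 Leaf, Play 0 2 Leaf]), Play 1 1 Leaf, Play 1 1 Leaf, Play 1 0 (Replies [Play 0 3 Leaf, Play 4 3 Leaf, Play 0 2 Leaf, Play 0 2 Leaf, Play 0 2 Leaf, Leaf, Play 0 2 Leaf]), Play 1 1 (Replies [Play 0 3 Leaf, Play 4 0 Leaf, Play 0 2 Leaf, Play 0 2 Leaf, Play 0 2 Leaf, Leaf, Play 0 3 Leaf])]),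
      Play 3 2 (Replies [Play 1 2 (Replies [Play 2 0 Leaf, Play 2 0 Leaf, Play 0 3 Leaf, Play 0 3 Leaf, Leaf, Play 0 3 Leaf, Play 2 0 Leaf]), Play 1 2 (Replies [Play 2 0 Leaf, Play 2 0 Leaf, Play 0 3 Leaf, Play 0 3 Leaf, Leaf, Play 2 0 Leaf, Play 0 3 Leaf]), Play 1 0 (Replies [Play 2 0 Leaf, Play 3 0 Leaf, Play 3 0 Leaf, Play 0 3 Leaf, Play 0 3 Leaf, Play 0 3 Leaf, Play 0 3 Leaf]), Play 1 1 (Replies [Play 2 0 Leaf, Play 2 0 Leaf, Play 3 0 Leaf, Play 0 0 Leaf, Leaf, Play 2 0 Leaf, Play 2 0 Leaf]), Play 1 2 (Replies [Play 2 0 Leaf, Play 2 0 Leaf, Play 0 0 Leaf, Play 0 0 Leaf, Play 0 0 Leaf, Leaf, Play 0 0 Leaf, Play 0 0 Leaf]), Play 1 2 (Replies [Play 0 3 Leaf, Play 0 0 Leaf, Leaf, Leaf, Play 0 0 Leaf, Play 0 0 Leaf]), Play 1 2 (Replies [Play 0 3 Leaf, Play 0 0 Leaf, Leaf, Play 0 0 Leaf, Play 0 0 Leaf, Play 0 0 Leaf]), Play 1 0 (Replies [Play 3 0 Leaf, Play 3 0 Leaf, Play 2 0 Leaf, Play 0 3 Leaf, Play 0 2 Leaf, Play 0 3 Leaf, Play 0 3 Leaf]), Play 1 1 (Replies [Play 3 0 Leaf, Play 3 0 Leaf, Play 0 3 Leaf, Play 0 0 Leaf, Play 0 0 Leaf,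 Play 0 3 (Replies [Leaf, Leaf, Leaf, Leaf]), Play 0 0 Leaf]), Play 1 2 (Replies [Play 0 3 Leaf, Play 0 3 Leaf, Play 0 0 Leaf, Play 0 0 Leaf, Leaf, Play 0 0 Leaf]), Play 1 2 Leaf, Play 1 2 (Replies [Play 0 3 Leaf, Play 2 0 Leaf, Play 0 0 Leaf, Play 0 0 Leaf, Play 0 0 Leaf, Leaf, Play 0 0 Leaf]), Play 1 2 (Replies [Play 2 0 Leaf, Play 0 3 Leaf, Play 0 0 Leaf, Play 0 0 Leaf, Play 0 0 Leaf, Play 0 0 Leaf, Play 0 0 Leaf])])],
     [Play 3 1 (Replies [Play 1 1 (Replies [Play 2 2 Leaf, Play 2 2 Leaf, Play 0 3 Leaf, Play 0 3 Leaf, Play 0 2 Leaf, Play 0 3 Leaf, Play 0 3 Leaf, Play 0 3 Leaf]), Play 1 2 (Replies [Play 2 2 Leaf, Play 2 3 Leaf, Play 2 3 Leaf, Play 3 3 Leaf, Play 4 3 Leaf, Play 4 3 Leaf, Play 2 0 Leaf, Play 2 3 Leaf]), Play 1 0 (Replies [Play 2 2 Leaf, Play 2 2 Leaf, Play 0 3 Leaf, Play 0 3 Leaf, Play 0 3 Leaf, Play 0 3 Leaf, Play 0 3 Leaf, Play 0 3 Leaf]), Play 1 0 (Replies [Play 2 2 Leaf, Play 2 2 Leaf, Play 2 3 Leaf, Play 2 2 Leaf, Play 4 3 Leaf, Play 2 2 Leaf, Play 2 2 Leaf, Play 2 2 Leaf]), Play 1 0 (Replies [Play 2 2 Leaf,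 Play 2 2 Leaf, Play 0 2 Leaf, Play 0 2 Leaf, Play 0 2 Leaf, Play 0 2 Leaf, Play 0 2 Leaf, Play 0 2 Leaf]), Play 1 1 (Replies [Play 2 3 Leaf, Play 0 2 Leaf, Leaf, Play 0 2 Leaf, Play 0 2 Leaf, Play 0 2 Leaf, Play 0 2 Leaf, Play 0 2 Leaf]), Play 3 3 (Replies [Play 1 2 Leaf, Play 1 3 Leaf, Play 0 0 (Replies [Leaf, Leaf, Play 2 2 Leaf, Play 2 3 Leaf, Play 2 2 Leaf]), Play 1 2 Leaf, Play 0 2 Leaf, Play 0 3 Leaf, Play 0 0 (Replies [Play 0 3 Leaf, Play 0 2 Leaf, Play 0 2 Leaf, Leaf, Leaf]), Play 1 2 Leaf]), Play 1 0 (Replies [Play 2 3 Leaf, Play 0 2 Leaf, Leaf, Play 0 2 Leaf, Play 0 2 Leaf, Play 0 2 Leaf, Play 0 2 Leaf, Play 0 2 Leaf]), Play 1 0 (Replies [Play 0 3 Leaf, Play 0 2 Leaf, Leaf, Leaf, Play 0 2 Leaf, Play 0 2 Leaf, Play 0 2 Leaf]), Play 1 0 (Replies [Play 0 3 Leaf, Play 2 2 Leaf, Play 0 2 Leaf, Leaf, Play 0 2 Leaf, Play 0 2 Leaf, Play 0 2 Leaf]), Play 1 0 (Replies [Play 0 3 Leaf, Play 4 3 Leaf, Play 0 2 Leaf, Play 0 2 Leaf, Play 0 2 Leaf, Leaf, Play 0 2 Leaf]), Play 1 0 (Replies [Play 0 3 Leaf, Play 2 2 Leaf, Play 0 2 Leaf,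 Play 0 2 Leaf, Play 0 2 Leaf, Leaf, Play 0 2 Leaf]), Play 1 0 (Replies [Play 0 3 Leaf, Play 2 2 Leaf, Play 0 2 Leaf, Play 0 2 Leaf, Play 0 2 Leaf, Play 0 2 Leaf, Play 0 2 Leaf, Play 0 2 Leaf]), Play 1 0 (Replies [Play 0 3 Leaf, Play 2 2 Leaf, Play 0 2 Leaf, Play 0 2 Leaf, Play 0 2 Leaf, Play 0 2 Leaf, Play 0 2 Leaf, Play 0 2 Leaf])]),
      Play 3 2 (Replies [Play 1 1 (Replies [Play 2 0 Leaf, Play 2 3 Leaf, Play 0 3 Leaf, Play 0 3 Leaf, Play 0 3 Leaf, Play 0 3 Leaf, Play 0 3 Leaf, Play 0 3 Leaf]), Play 1 2 (Replies [Play 2 0 Leaf, Play 2 0 Leaf, Play 2 3 Leaf, Play 2 0 Leaf, Play 2 3 Leaf, Play 0 3 Leaf, Play 2 0 Leaf, Play 2 0 Leaf]), Play 1 0 (Replies [Play 2 0 Leaf, Play 2 3 Leaf, Play 0 3 Leaf, Play 0 3 Leaf, Play 0 3 Leaf, Play 0 3 Leaf, Play 0 3 Leaf, Play 0 3 Leaf]), Play 1 1 (Replies [Play 2 0 Leaf, Play 2 0 Leaf, Play 2 3 Leaf, Play 2 0 Leaf, Play 0 0 Leaf, Play 2 0 Leaf, Play 2 0 Leaf, Play 2 0 Leaf]), Play 1 2 (Replies [Play 2 0 Leaf, Play 2 0 Leaf, Play 0 0 Leaf, Play 0 0 Leaf, Play 0 0 Leaf, Play 0 0 Leaf, Play 0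 0 Leaf, Play 0 0 Leaf]), Play 1 1 (Replies [Play 2 3 Leaf, Play 0 2 Leaf, Leaf, Play 0 2 Leaf, Play 0 2 Leaf, Play 0 2 Leaf, Play 0 2 Leaf]), Play 1 2 (Replies [Play 0 3 Leaf, Play 0 0 Leaf, Leaf, Leaf, Play 0 0 Leaf, Play 0 0 Leaf, Play 0 0 Leaf, Play 0 0 Leaf]), Play 1 0 (Replies [Play 2 3 (Replies [Play 2 0 Leaf, Play 4 3 Leaf, Leaf, Play 2 0 Leaf]), Play 2 3 (Replies [Play 2 0 Leaf, Play 0 2 Leaf, Leaf, Play 0 2 Leaf]), Play 2 0 Leaf, Play 4 3 (Replies [Play 2 0 Leaf, Leaf, Play 0 2 Leaf, Leaf]), Play 1 3 Leaf, Play 0 3 Leaf, Play 0 2 Leaf, Play 1 3 Leaf]), Play 1 1 (Replies [Play 0 3 Leaf, Play 0 0 Leaf, Leaf, Leaf, Play 0 0 Leaf, Play 0 0 Leaf, Play 0 0 Leaf, Play 0 0 Leaf]), Play 1 1 (Replies [Play 0 3 Leaf, Play 2 0 Leaf, Play 0 2 Leaf, Leaf, Play 0 0 Leaf, Play 0 3 Leaf, Play 0 3 Leaf]), Play 1 1 (Replies [Play 0 3 Leaf, Play 0 0 Leaf, Play 2 3 Leaf, Play 0 0 Leaf, Play 0 0 Leaf, Play 0 0 Leaf, Play 0 3 Leaf]), Play 1 2 (Replies [Play 2 0 Leaf, Play 0 3 Leaf, Play 0 0 Leaf, Play 0 0 Leaf, Play 0 0 Leaf, Play 0 0 Leaf,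 Play 0 0 Leaf]), Play 1 0 (Replies [Play 0 3 Leaf, Play 2 2 Leaf, Play 0 2 Leaf, Play 0 2 Leaf, Play 0 2 Leaf, Play 0 2 Leaf, Play 0 2 Leaf, Play 0 2 Leaf]), Play 1 1 (Replies [Play 0 3 Leaf, Play 2 0 Leaf, Play 2 3 Leaf, Play 0 2 Leaf, Play 0 0 Leaf, Play 0 3 Leaf, Play 0 3 Leaf, Play 0 3 Leaf])]),
      Play 3 0 (Replies [Play 1 1 (Replies [Play 2 2 Leaf, Play 2 2 Leaf, Play 0 3 Leaf, Play 0 3 Leaf, Play 0 2 Leaf, Play 0 3 Leaf, Play 0 3 Leaf, Play 0 3 Leaf]), Play 1 2 (Replies [Play 2 2 Leaf, Play 2 3 Leaf, Play 2 3 Leaf, Play 3 3 Leaf, Play 4 3 Leaf, Play 4 3 Leaf, Play 2 0 Leaf, Play 2 3 Leaf]), Play 1 0 (Replies [Play 2 2 Leaf, Play 2 2 Leaf, Play 0 3 Leaf, Play 0 3 Leaf, Play 0 3 Leaf, Play 0 3 Leaf, Play 0 3 Leaf, Play 0 3 Leaf]), Play 1 0 (Replies [Play 2 2 Leaf, Play 2 2 Leaf, Play 2 3 Leaf, Play 2 2 Leaf, Play 4 3 Leaf, Play 2 2 Leaf, Play 2 2 Leaf, Play 2 2 Leaf]), Play 1 0 (Replies [Play 2 2 Leaf, Play 2 2 Leaf, Play 0 2 Leaf, Play 0 2 Leaf, Play 0 2 Leaf, Play 0 2 Leaf, Play 0 2 Leaf, Play 0 2 Leaf]), Play 1 1 (Replies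 [Play 2 3 Leaf, Play 0 2 Leaf, Leaf, Play 0 2 Leaf, Play 0 2 Leaf, Play 0 2 Leaf, Play 0 2 Leaf, Play 0 2 Leaf]), Play 3 3 (Replies [Play 1 2 Leaf, Play 1 3 Leaf, Play 0 0 (Replies [Leaf, Leaf, Play 2 2 Leaf, Play 2 3 Leaf, Play 2 2 Leaf]), Play 1 2 Leaf, Play 0 2 Leaf, Play 0 3 Leaf, Play 0 0 (Replies [Play 0 3 Leaf, Play 0 2 Leaf, Play 0 2 Leaf, Leaf, Leaf]), Play 1 2 Leaf]), Play 1 0 (Replies [Play 2 3 Leaf, Play 0 2 Leaf, Leaf, Play 0 2 Leaf, Play 0 2 Leaf, Play 0 2 Leaf, Play 0 2 Leaf, Play 0 2 Leaf]), Play 1 0 (Replies [Play 0 3 Leaf, Play 0 2 Leaf, Leaf, Leaf, Play 0 2 Leaf, Play 0 2 Leaf, Play 0 2 Leaf]), Play 1 0 (Replies [Play 0 3 Leaf, Play 2 2 Leaf, Play 0 2 Leaf, Leaf, Play 0 2 Leaf, Play 0 2 Leaf, Play 0 2 Leaf]), Play 1 0 (Replies [Play 0 3 Leaf, Play 4 3 Leaf, Play 0 2 Leaf, Play 0 2 Leaf, Play 0 2 Leaf, Leaf, Play 0 2 Leaf]), Play 1 0 (Replies [Play 0 3 Leaf, Play 2 2 Leaf, Play 0 2 Leaf, Play 0 2 Leaf, Play 0 2 Leaf, Leaf, Play 0 2 Leaf]), Play 1 0 (Replies [Play 0 3 Leaf, Play 2 2 Leaf, Play 0 2 Leaf, Play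 0 2 Leaf, Play 0 2 Leaf, Play 0 2 Leaf, Play 0 2 Leaf, Play 0 2 Leaf]), Play 1 0 (Replies [Play 0 3 Leaf, Play 2 2 Leaf, Play 0 2 Leaf, Play 0 2 Leaf, Play 0 2 Leaf, Play 0 2 Leaf, Play 0 2 Leaf, Play 0 2 Leaf])]),
      Play 3 1 (Replies [Play 1 1 (Replies [Play 2 0 Leaf, Play 2 3 Leaf, Play 0 3 Leaf, Play 0 3 Leaf, Play 0 3 Leaf, Play 0 3 Leaf, Play 0 3 Leaf, Play 0 3 Leaf]), Play 1 2 (Replies [Play 2 0 Leaf, Play 2 0 Leaf, Play 2 3 Leaf, Play 2 0 Leaf, Play 2 3 Leaf, Play 0 3 Leaf, Play 2 0 Leaf, Play 2 0 Leaf]), Play 1 0 (Replies [Play 2 0 Leaf, Play 2 3 Leaf, Play 0 3 Leaf, Play 0 3 Leaf, Play 0 3 Leaf, Play 0 3 Leaf, Play 0 3 Leaf, Play 0 3 Leaf]), Play 1 1 (Replies [Play 2 0 Leaf, Play 2 0 Leaf, Play 2 3 Leaf, Play 2 0 Leaf, Play 0 0 Leaf, Play 2 0 Leaf, Play 2 0 Leaf, Play 2 0 Leaf]), Play 1 2 (Replies [Play 2 0 Leaf, Play 2 0 Leaf, Play 0 0 Leaf, Play 0 0 Leaf, Play 0 0 Leaf, Play 0 0 Leaf, Play 0 0 Leaf, Play 0 0 Leaf]), Play 1 1 (Replies [Play 2 3 Leaf, Play 0 2 Leaf, Leaf, Play 0 2 Leaf, Play 0 2 Leaf, Play 0 2 Leaf,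 Play 0 2 Leaf]), Play 1 2 (Replies [Play 0 3 Leaf, Play 0 0 Leaf, Leaf, Leaf, Play 0 0 Leaf, Play 0 0 Leaf, Play 0 0 Leaf, Play 0 0 Leaf]), Play 1 3 (Replies [Play 2 0 (Replies [Play 2 3 Leaf, Play 0 1 Leaf, Play 0 1 Leaf, Leaf]), Play 2 0 (Replies [Play 2 3 Leaf, Play 4 0 Leaf, Play 2 3 Leaf, Leaf]), Play 4 0 (Replies [Play 2 3 Leaf, Leaf, Play 0 0 Leaf, Leaf]), Play 2 3 Leaf, Play 0 0 Leaf, Play 1 0 Leaf, Play 1 0 Leaf, Play 0 0 Leaf]), Play 1 1 (Replies [Play 0 3 Leaf, Play 0 0 Leaf, Leaf, Leaf, Play 0 0 Leaf, Play 0 0 Leaf, Play 0 0 Leaf, Play 0 0 Leaf]), Play 1 1 (Replies [Play 0 3 Leaf, Play 2 0 Leaf, Play 0 2 Leaf, Leaf, Play 0 0 Leaf, Play 0 3 Leaf, Play 0 3 Leaf]), Play 1 1 (Replies [Play 0 3 Leaf, Play 0 0 Leaf, Play 2 3 Leaf, Play 0 0 Leaf, Play 0 0 Leaf, Play 0 0 Leaf, Play 0 3 Leaf]), Play 1 2 (Replies [Play 2 0 Leaf, Play 0 3 Leaf, Play 0 0 Leaf, Play 0 0 Leaf, Play 0 0 Leaf, Play 0 0 Leaf, Play 0 0 Leaf]), Play 1 0 (Replies [Play 0 3 Leaf, Play 2 2 Leaf, Play 0 2 Leaf, Play 0 2 Leaf, Play 0 2 Leaf, Play 0 2 Leaf,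 Play 0 2 Leaf, Play 0 2 Leaf]), Play 1 1 (Replies [Play 0 3 Leaf, Play 2 0 Leaf, Play 2 3 Leaf, Play 0 2 Leaf, Play 0 0 Leaf, Play 0 3 Leaf, Play 0 3 Leaf, Play 0 3 Leaf])]),
      Play 3 2 (Replies [Play 1 1 (Replies [Play 2 0 Leaf, Play 3 0 Leaf, Play 3 0 Leaf, Play 3 0 Leaf, Play 1 3 Leaf, Play 1 3 Leaf, Play 1 3 Leaf, Play 0 3 Leaf]), Play 1 2 (Replies [Play 2 0 Leaf, Play 2 0 Leaf, Play 3 0 Leaf, Play 2 0 Leaf, Play 4 0 Leaf, Play 4 0 Leaf, Play 2 0 Leaf, Play 2 0 Leaf]), Play 1 0 (Replies [Play 2 0 Leaf, Play 3 0 Leaf, Play 3 0 Leaf, Play 3 0 Leaf, Play 1 3 Leaf, Play 1 3 Leaf, Play 1 3 Leaf, Play 0 3 Leaf]), Play 1 1 (Replies [Play 2 0 Leaf, Play 2 0 Leaf, Play 3 0 Leaf, Play 2 0 Leaf, Play 4 0 Leaf, Play 4 0 Leaf, Play 2 0 Leaf, Play 2 0 Leaf]), Play 1 0 (Replies [Play 3 0 Leaf, Play 2 0 Leaf, Play 3 0 Leaf, Play 3 0 Leaf, Play 1 2 Leaf, Play 1 2 Leaf, Play 1 2 Leaf, Play 1 2 Leaf]), Play 1 2 (Replies [Play 3 0 Leaf, Play 0 0 Leaf, Leaf, Play 0 0 Leaf, Play 0 0 Leaf, Play 0 0 Leaf, Play 0 0 Leaf]), Play 1 2 (Replies [Play 0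 3 Leaf, Play 0 0 Leaf, Leaf, Leaf, Play 0 0 Leaf, Play 0 0 Leaf, Play 0 0 Leaf]), Play 1 3 (Replies [Play 0 1 Leaf, Play 2 0 Leaf, Play 0 0 Leaf, Leaf, Play 0 0 Leaf, Play 0 0 Leaf, Play 0 0 Leaf, Play 0 0 Leaf]), Play 3 0 (Replies [Play 1 1 Leaf, Play 0 3 (Replies [Leaf, Leaf, Play 2 1 Leaf, Play 2 0 Leaf, Play 2 0 Leaf]), Play 1 0 Leaf, Play 1 0 Leaf, Play 1 1 Leaf, Play 0 0 (Replies [Play 0 3 Leaf, Play 0 2 Leaf, Play 0 2 Leaf, Leaf, Leaf]), Play 0 0 Leaf, Play 0 0 Leaf]), Play 1 2 (Replies [Play 0 1 Leaf, Play 2 0 Leaf, Play 0 0 Leaf, Leaf, Play 0 0 Leaf, Play 0 0 Leaf, Play 0 0 Leaf, Play 0 0 Leaf]), Play 1 2 (Replies [Play 4 0 Leaf, Play 4 0 Leaf, Play 0 0 Leaf, Play 0 0 Leaf, Play 0 0 Leaf, Leaf, Play 0 0 Leaf]), Play 1 2 (Replies [Play 4 0 Leaf, Play 4 0 Leaf, Play 0 0 Leaf, Play 0 0 Leaf, Play 0 0 Leaf, Leaf, Play 0 0 Leaf]), Play 1 2 (Replies [Play 2 0 Leaf, Play 2 0 Leaf, Play 0 0 Leaf, Play 0 0 Leaf, Play 0 0 Leaf, Play 0 0 Leaf, Play 0 0 Leaf, Play 0 0 Leaf]), Play 1 1 (Replies [Play 0 3 Leaf, Play 2 0 Leaf, Play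 2 3 Leaf, Play 0 2 Leaf, Play 0 0 Leaf, Play 0 3 Leaf, Play 0 3 Leaf, Play 0 3 Leaf])])]]"

lemma replies_5x5_row_0: "certs_ok (full_grid 5 5) (map (Pair 0) [0..<5]) (replies_5x5 ! 0)"
  unfolding replies_5x5_def by code_simp

lemma replies_5x5_row_1: "certs_ok (full_grid 5 5) (map (Pair 1) [0..<5]) (replies_5x5 ! 1)"
  unfolding replies_5x5_def by code_simp

lemma replies_5x5_row_2: "certs_ok (full_grid 5 5) (map (Pair 2) [0..<5]) (replies_5x5 ! 2)"
  unfolding replies_5x5_def by code_simp

lemma replies_5x5_row_3: "certs_ok (full_grid 5 5) (map (Pair 3) [0..<5]) (replies_5x5 ! 3)"
  unfolding replies_5x5_def by code_simp

lemma wins_second_Hepzibah_board_5_5: "wins_second Hepzibah (board 5 5)"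
proof -
  let ?rows = "[map (Pair 0) [0..<5], map (Pair 1) [0..<5], map (Pair 2) [0..<5],
    map (Pair 3) [0..<5]]"
  have "vert_move_list (full_grid 5 5) = concat ?rows"
    by code_simp
  moreover have "replies_5x5 = [replies_5x5 ! 0, replies_5x5 ! 1, replies_5x5 ! 2, replies_5x5 ! 3]"
    by (simp add: replies_5x5_def)
  moreover have "list_all2 (certs_ok (full_grid 5 5)) ?rows
      [replies_5x5 ! 0, replies_5x5 ! 1, replies_5x5 ! 2, replies_5x5 ! 3]"
    using replies_5x5_row_0 replies_5x5_row_1 replies_5x5_row_2 replies_5x5_row_3 by simp
  ultimately have "cert_ok False (full_grid 5 5) (Replies (concat replies_5x5))"
    using certs_ok_concat by (metis cert_ok.simps(3))
  then show ?thesis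
    using cert_ok_sound(1) by (fastforce simp: board_eq_free_cells)
qed

lemma has_outcome_OH_board_even:
  assumes "has_outcome (board m 2) OH"
  shows "has_outcome (board m (2 * k + 2)) OH"
proof (induction k)
  case 0
  then show ?case
    using assms by (simp add: numeral_2_eq_2)
next
  case (Suc k)
  have "has_outcome (board m (2 + (2 * k + 2))) OH"
    by (rule has_outcome_OH_board_add_cols[OF _ Suc]) (use assms in simp)
  then show ?case
    by (simp add: algebra_simps)
qed

lemma has_outcome_OH_board_5_ge_6:
  assumes "n \<ge> 6"
  shows "has_outcome (board 5 n) OH"
proof (cases "even n")
  case True
  then have "n = 2 * (n div 2 - 1) + 2"
    using assms by auto
  then show ?thesis
    using has_outcome_OH_board_even[OF has_outcome_OH_board_5_2] by metis
next
  case False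
  then have "n = 5 + (2 * ((n - 5) div 2 - 1) + 2)"
    using assms by presburger
  then show ?thesis
    using has_outcome_OH_board_add_cols[OF wins_second_Hepzibah_board_5_5
        has_outcome_OH_board_even[OF has_outcome_OH_board_5_2]] by metis
qed

theorem mainTheorem3:
  shows "has_outcome (board 5 1) OV \<and> has_outcome (board 5 3) OV
    \<and> has_outcome (board 5 2) OH \<and> has_outcome (board 5 4) OH
    \<and> has_outcome (board 5 5) OSecond
    \<and> (\<forall>n::nat. n \<ge> 6 \<longrightarrow> has_outcome (board 5 n) OH)"
proof -
  have "has_outcome (board 5 4) OH"
    using has_outcome_OH_board_even[OF has_outcome_OH_board_5_2, of 1] by simp
  moreover have "wins_second Vera (board 5 5)"
    using wins_second_transpose[OF wins_second_Hepzibah_board_5_5] by (simp add: transpose_board)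
  ultimately show ?thesis
    using has_outcome_OV_board_column[of 5] has_outcome_OV_board_5_3 has_outcome_OH_board_5_2
      wins_second_Hepzibah_board_5_5 has_outcome_OH_board_5_ge_6 by simp
qed

end
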